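(* Let $1\le k\le n-1$. Then $\overline{\mathrm{Im}\,R_{n-k}}=\overline{\mathrm{Im}\,(I\circ R_k)}$, closures taken in the maximum norm of $C(G(n,n-k))$.
   Context: $G(n,m)$ is the Grassmannian of $m$-dimensional subspaces of $\mathbb{R}^n$. For $E\in G(n,m)$, $R_mf(E)=\int_{S^{n-1}\cap E}f\,d\sigma_E$ ($\sigma_E$ Haar probability on $S^{n-1}\cap E$), $R_m:C(S^{n-1})\to C(G(n,m))$. $I:C(G(n,k))\to C(G(n,n-k))$ is $I(f)(E)=f(E^\perp)$. *)

theory Defs
  imports "HOL-Probability.Probability"
begin

definition grassmannian :: "nat \<Rightarrow> ('a::euclidean_space) set set" where
  "grassmannian m = {E. subspace E \<and> dim E = m}"

definition haar_sphere :: "('a::euclidean_space) set \<Rightarrow> 'a measure" where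
  "haar_sphere E = (THE \<mu>.
      sets \<mu> = sets (restrict_space borel (sphere 0 1 \<inter> E)) \<and>
      prob_space \<mu> \<and>
      (\<forall>T. orthogonal_transformation T \<and> T ` E = E \<longrightarrow>
         (\<forall>A \<in> sets \<mu>. emeasure \<mu> (T -` A \<inter> space \<mu>) = emeasure \<mu> A)))"

definition radon :: "(('a::euclidean_space) \<Rightarrow> real) \<Rightarrow> 'a set \<Rightarrow> real" where
  "radon f E = integral\<^sup>L (haar_sphere E) f"

definition Csphere :: "(('a::euclidean_space) \<Rightarrow> real) set" where
  "Csphere = {f. continuous_on (sphere 0 1) f}"

definition sup_closure :: "'a set set \<Rightarrow> ('a set \<Rightarrow> real) set \<Rightarrow> ('a set \<Rightarrow> real) set" where
  "sup_closure G S = {g. \<forall>e>0. \<exists>h\<in>S. \<forall>E\<in>G. \<bar>g E - h E\<bar> \<le> e}"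

end

theory Submission
  imports Defs
begin

text \<open>
  Rotation invariance of the Haar measures makes \<open>R_m\<close> of a ridge function \<open>x \<mapsto> \<phi> (a \<bullet> x)\<close>
  at \<open>E\<close> depend only on \<open>dim E\<close> and on the length of the projection \<open>P_E a\<close>. Approximate \<open>f\<close> by
  an exponential sum \<open>\<Sum> c_i exp (a_i \<bullet> x)\<close> (Stone--Weierstrass). Then \<open>R_k f (E\<^sup>\<bottom>)\<close> is close to
  \<open>\<Sum> c_i \<Psi> (sqrt (|a_i|\<^sup>2 - |P_E a_i|\<^sup>2))\<close> for one continuous function \<open>\<Psi>\<close>, whereas
  \<open>R_(n-k)\<close> of \<open>(a \<bullet> x)^(2j)\<close> at \<open>E\<close> equals \<open>C_j |P_E a|^(2j)\<close> with \<open>C_j > 0\<close>. Approximating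
  \<open>q \<mapsto> \<Psi> (sqrt (|a|\<^sup>2 - q))\<close> by polynomials on \<open>[0, |a|\<^sup>2]\<close> thus approximates \<open>I \<circ> R_k f\<close>
  uniformly by functions \<open>R_(n-k) h\<close>. Exchanging \<open>k\<close> and \<open>n - k\<close> and using \<open>E\<^sup>\<bottom>\<^sup>\<bottom> = E\<close> gives
  the other inclusion.

  The Haar measures are well defined: two probability measures on a compact set that are
  invariant under isometries acting transitively on it coincide (integrate against the kernel
  \<open>max 0 (\<delta> - dist x y)\<close> and use Fubini), and one such measure is the uniform measure on the
  unit ball pushed radially onto the sphere of the subspace.
\<close>

section \<open>Orthogonal projections and orthogonal maps between subspaces\<close>

definition orthogonal_projection :: "'a::euclidean_space set \<Rightarrow> 'a \<Rightarrow> 'a" where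
  "orthogonal_projection F x = (SOME y. y \<in> F \<and> x - y \<in> orthogonal_comp F)"

context
  fixes F :: "'a::euclidean_space set"
  assumes F: "subspace F"
begin

lemma orthogonal_projection_decomposition:
  "orthogonal_projection F x \<in> F \<and> x - orthogonal_projection F x \<in> orthogonal_comp F"
proof -
  have "x \<in> F + orthogonal_comp F" using subspace_sum_orthogonal_comp[OF F] by simp
  then obtain a b where "x = a + b" "a \<in> F" "b \<in> orthogonal_comp F"
    by (rule set_plus_elim)
  then have "\<exists>y. y \<in> F \<and> x - y \<in> orthogonal_comp F" by (intro exI[of _ a]) auto
  then show ?thesis unfolding orthogonal_projection_def by (rule someI_ex)
qed

lemma orthogonal_projection_in: "orthogonal_projection F x \<in> F"
  using orthogonal_projection_decomposition by blast

lemma orthogonal_projection_diff_in: "x - orthogonal_projection F x \<in> orthogonal_comp F"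
  using orthogonal_projection_decomposition by blast

lemma orthogonal_projection_unique:
  assumes "y \<in> F" "x - y \<in> orthogonal_comp F"
  shows "orthogonal_projection F x = y"
proof -
  have "y - orthogonal_projection F x \<in> F"
    using F assms(1) orthogonal_projection_in subspace_diff by blast
  moreover have "y - orthogonal_projection F x = (x - orthogonal_projection F x) - (x - y)"
    by simp
  then have "y - orthogonal_projection F x \<in> orthogonal_comp F"
    using orthogonal_projection_diff_in assms(2) subspace_diff subspace_orthogonal_comp by metis
  ultimately have "y - orthogonal_projection F x = 0" using orthogonal_Int_0[OF F] by blast
  then show ?thesis by simp
qed

lemma orthogonal_projection_id: "y \<in> F \<Longrightarrow> orthogonal_projection F y = y"
  by (rule orthogonal_projection_unique) (auto simp: orthogonal_comp_def orthogonal_def)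

lemma inner_orthogonal_projection: "y \<in> F \<Longrightarrow> a \<bullet> y = orthogonal_projection F a \<bullet> y"
  using orthogonal_projection_diff_in[of a]
  by (auto simp: orthogonal_comp_def orthogonal_def inner_diff_right inner_commute)

lemma linear_orthogonal_projection: "linear (orthogonal_projection F)"
proof
  fix x y :: 'a and c :: real
  show "orthogonal_projection F (x + y) = orthogonal_projection F x + orthogonal_projection F y"
  proof (rule orthogonal_projection_unique)
    show "orthogonal_projection F x + orthogonal_projection F y \<in> F"
      by (simp add: F subspace_add orthogonal_projection_in)
    have "x + y - (orthogonal_projection F x + orthogonal_projection F y)
        = (x - orthogonal_projection F x) + (y - orthogonal_projection F y)" by simp
    also have "\<dots> \<in> orthogonal_comp F"
      by (intro subspace_add[OF subspace_orthogonal_comp] orthogonal_projection_diff_in)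
    finally show "x + y - (orthogonal_projection F x + orthogonal_projection F y) \<in> orthogonal_comp F" .
  qed
  show "orthogonal_projection F (c *\<^sub>R x) = c *\<^sub>R orthogonal_projection F x"
  proof (rule orthogonal_projection_unique)
    show "c *\<^sub>R orthogonal_projection F x \<in> F"
      by (simp add: F subspace_scale orthogonal_projection_in)
    have "c *\<^sub>R x - c *\<^sub>R orthogonal_projection F x = c *\<^sub>R (x - orthogonal_projection F x)"
      by (simp add: algebra_simps)
    also have "\<dots> \<in> orthogonal_comp F"
      by (intro subspace_scale[OF subspace_orthogonal_comp] orthogonal_projection_diff_in)
    finally show "c *\<^sub>R x - c *\<^sub>R orthogonal_projection F x \<in> orthogonal_comp F" .
  qed
qed

lemma norm_orthogonal_projection_Pythagorean:
  "(norm x)\<^sup>2 = (norm (orthogonal_projection F x))\<^sup>2 + (norm (x - orthogonal_projection F x))\<^sup>2"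
proof -
  have "orthogonal (orthogonal_projection F x) (x - orthogonal_projection F x)"
    using orthogonal_projection_in orthogonal_projection_diff_in
    by (auto simp: orthogonal_comp_def)
  from norm_add_Pythagorean[OF this] show ?thesis by simp
qed

lemma norm_orthogonal_projection_le: "norm (orthogonal_projection F x) \<le> norm x"
proof (rule power2_le_imp_le)
  show "(norm (orthogonal_projection F x))\<^sup>2 \<le> (norm x)\<^sup>2"
    using norm_orthogonal_projection_Pythagorean[of x] by simp
qed simp

lemma orthogonal_projection_orthogonal_transformation:
  assumes T: "orthogonal_transformation T" "T ` F = F"
  shows "orthogonal_projection F (T x) = T (orthogonal_projection F x)"
proof (rule orthogonal_projection_unique)
  have "T (orthogonal_projection F x) \<in> T ` F" by (rule imageI[OF orthogonal_projection_in])
  then show "T (orthogonal_projection F x) \<in> F" by (simp only: T(2))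
  have "T x - T (orthogonal_projection F x) = T (x - orthogonal_projection F x)"
    by (simp add: linear_diff[OF orthogonal_transformation_linear[OF T(1)]])
  moreover have "orthogonal y (T (x - orthogonal_projection F x))" if "y \<in> F" for y
  proof -
    from that have "y \<in> T ` F" by (simp only: T(2))
    then obtain z where z: "z \<in> F" "y = T z" by (rule imageE)
    have "orthogonal z (x - orthogonal_projection F x)"
      using z(1) orthogonal_projection_diff_in[of x] unfolding orthogonal_comp_def by blast
    then show ?thesis
      using T(1) z(2) by (simp add: orthogonal_transformation_def orthogonal_def)
  qed
  ultimately show "T x - T (orthogonal_projection F x) \<in> orthogonal_comp F"
    by (simp add: orthogonal_comp_def)
qed

lemma dim_orthogonal_comp: "dim (orthogonal_comp F) + dim F = DIM('a)"
proof -
  have "{y. \<forall>x \<in> F. orthogonal x y} = orthogonal_comp F"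
    by (auto simp: orthogonal_comp_def)
  then show ?thesis
    using dim_subspace_orthogonal_to_vectors[OF F subspace_UNIV] by simp
qed

end

lemma orthogonal_projection_orthogonal_comp:
  assumes "subspace F"
  shows "orthogonal_projection (orthogonal_comp F) x = x - orthogonal_projection F x"
proof (rule orthogonal_projection_unique[OF subspace_orthogonal_comp])
  show "x - orthogonal_projection F x \<in> orthogonal_comp F"
    by (rule orthogonal_projection_diff_in[OF assms])
  show "x - (x - orthogonal_projection F x) \<in> orthogonal_comp (orthogonal_comp F)"
    using orthogonal_comp_subset orthogonal_projection_in[OF assms] by auto
qed

lemma orthogonal_comp_grassmannian:
  fixes E :: "'a::euclidean_space set"
  assumes "E \<in> grassmannian m"
  shows "orthogonal_comp E \<in> grassmannian (DIM('a) - m)"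
  using assms dim_orthogonal_comp[of E] subspace_orthogonal_comp by (auto simp: grassmannian_def)

lemma exists_subspace_unit_vector:
  assumes "0 < d" "d \<le> DIM('a::euclidean_space)"
  obtains F :: "'a::euclidean_space set" and u where "subspace F" "dim F = d" "u \<in> F" "norm u = 1"
proof -
  obtain F :: "'a set" where F: "subspace F" "dim F = d"
    using choose_subspace_of_subspace[of d UNIV] assms(2) by auto
  then have "\<not> F \<subseteq> {0}" using assms(1) by (metis dim_eq_0 less_nat_zero_code)
  then obtain v where "v \<in> F" "v \<noteq> 0" by blast
  then show thesis using F by (intro that[of F "v /\<^sub>R norm v"]) (simp_all add: subspace_scale)
qed

definition reflection :: "'a::real_inner \<Rightarrow> 'a \<Rightarrow> 'a" where
  "reflection v z = z - (2 * (v \<bullet> z) / (v \<bullet> v)) *\<^sub>R v"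

lemma linear_reflection: "linear (reflection v)"
  by (rule linearI) (simp_all add: reflection_def inner_add_right scaleR_add_left
      scaleR_diff_right add_divide_distrib algebra_simps)

lemma inner_reflection_left: "v \<bullet> reflection v z = - (v \<bullet> z)"
  by (cases "v = 0") (simp_all add: reflection_def inner_diff_right)

lemma reflection_reflection: "reflection v (reflection v z) = z"
  by (simp add: reflection_def inner_reflection_left[unfolded reflection_def])

lemma orthogonal_transformation_reflection: "orthogonal_transformation (reflection v)"
  unfolding orthogonal_transformation_def
proof (intro conjI allI linear_reflection)
  fix z w
  show "reflection v z \<bullet> reflection v w = z \<bullet> w"
    by (cases "v = 0")
       (simp_all add: reflection_def inner_diff_left inner_diff_right inner_commute
         power2_eq_square field_simps)
qed

lemma reflection_image_subspace:
  assumes "subspace F" "v \<in> F"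
  shows "reflection v ` F = F"
proof -
  have maps: "reflection v z \<in> F" if "z \<in> F" for z
    using assms that by (simp add: reflection_def subspace_diff subspace_scale)
  have "z \<in> reflection v ` F" if "z \<in> F" for z
    using maps[OF that] reflection_reflection[of v z] by (metis image_eqI)
  then show ?thesis using maps by blast
qed

lemma reflection_swap:
  fixes a b :: "'a::real_inner"
  assumes "norm a = norm b"
  shows "reflection (a - b) a = b"
proof (cases "a = b")
  case False
  have "a \<bullet> a = b \<bullet> b" using assms by (simp add: dot_square_norm)
  then have "2 * ((a - b) \<bullet> a) = (a - b) \<bullet> (a - b)"
    by (simp add: inner_diff_left inner_diff_right inner_commute)
  moreover have "(a - b) \<bullet> (a - b) \<noteq> 0" using False by simp
  ultimately have "2 * ((a - b) \<bullet> a) / ((a - b) \<bullet> (a - b)) = 1" by (metis divide_self)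
  then have "reflection (a - b) a = a - 1 *\<^sub>R (a - b)" unfolding reflection_def by (simp only:)
  then show ?thesis by simp
qed (simp add: reflection_def)

lemma orthogonal_transformation_onto_subspace:
  fixes F0 F :: "'a::euclidean_space set"
  assumes F0: "subspace F0" and F: "subspace F" and d: "dim F0 = dim F"
  obtains T where "orthogonal_transformation T" "T ` F0 = F"
proof -
  obtain f where f: "linear f" "f ` F0 = F" "\<And>x. x \<in> F0 \<Longrightarrow> norm (f x) = norm x"
    using isometry_subspaces[OF F0 F d] by blast
  have "dim (orthogonal_comp F0) = dim (orthogonal_comp F)"
    using dim_orthogonal_comp[OF F0] dim_orthogonal_comp[OF F] d by simp
  then obtain g where g: "linear g" "g ` orthogonal_comp F0 = orthogonal_comp F"
      "\<And>x. x \<in> orthogonal_comp F0 \<Longrightarrow> norm (g x) = norm x"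
    using isometry_subspaces[OF subspace_orthogonal_comp subspace_orthogonal_comp] by blast
  let ?P = "orthogonal_projection F0"
  define T where "T x = f (?P x) + g (x - ?P x)" for x
  have "linear T"
    unfolding T_def using linear_orthogonal_projection[OF F0] f(1) g(1)
    by (intro linear_compose_add linear_compose[of ?P f, unfolded o_def]
        linear_compose[of "\<lambda>x. x - ?P x" g, unfolded o_def] linear_compose_sub linear_ident)
  moreover have "norm (T x) = norm x" for x
  proof -
    have "f (?P x) \<in> F" "g (x - ?P x) \<in> orthogonal_comp F"
      using f(2) g(2) orthogonal_projection_in[OF F0] orthogonal_projection_diff_in[OF F0] by blast+
    then have "(norm (T x))\<^sup>2 = (norm (f (?P x)))\<^sup>2 + (norm (g (x - ?P x)))\<^sup>2"
      unfolding T_def by (intro norm_add_Pythagorean) (simp add: orthogonal_comp_def)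
    also have "\<dots> = (norm x)\<^sup>2"
      using f(3)[OF orthogonal_projection_in[OF F0]] g(3)[OF orthogonal_projection_diff_in[OF F0]]
        norm_orthogonal_projection_Pythagorean[OF F0, of x] by simp
    finally show ?thesis by simp
  qed
  ultimately have "orthogonal_transformation T" by (simp add: orthogonal_transformation)
  moreover have "T ` F0 = f ` F0"
    using orthogonal_projection_id[OF F0] linear_0[OF g(1)] by (intro image_cong) (simp_all add: T_def)
  ultimately show thesis using f(2) that by simp
qed

lemma orthogonal_transformation_onto_subspace_point:
  fixes F0 F :: "'a::euclidean_space set"
  assumes F0: "subspace F0" and F: "subspace F" and d: "dim F0 = dim F"
    and x: "x \<in> F0" and y: "y \<in> F" and xy: "norm x = norm y"
  obtains T where "orthogonal_transformation T" "T ` F0 = F" "T x = y"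
proof -
  obtain T1 where T1: "orthogonal_transformation T1" "T1 ` F0 = F"
    using orthogonal_transformation_onto_subspace[OF F0 F d] by blast
  define R where "R = reflection (T1 x - y)"
  have "T1 x \<in> F" using T1(2) x by blast
  then have "R ` F = F" unfolding R_def using F y by (intro reflection_image_subspace subspace_diff)
  then have "(R \<circ> T1) ` F0 = F" using T1(2) by (simp only: image_comp[symmetric])
  moreover have "(R \<circ> T1) x = y"
    using xy T1(1) by (simp add: R_def reflection_swap orthogonal_transformation_norm)
  moreover have "orthogonal_transformation (R \<circ> T1)"
    unfolding R_def by (intro orthogonal_transformation_compose orthogonal_transformation_reflection T1(1))
  ultimately show thesis using that by blast
qed

section \<open>Uniqueness of isometry-invariant probability measures\<close>

lemma integrable_bounded_continuous:
  fixes h :: "'a::topological_space \<Rightarrow> real"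
  assumes "finite_measure M" "sets M = sets borel" "continuous_on UNIV h" "\<And>x. \<bar>h x\<bar> \<le> C"
  shows "integrable M h"
proof -
  interpret finite_measure M by fact
  have "h \<in> borel_measurable M"
    using borel_measurable_continuous_onI[OF assms(3)] measurable_cong_sets[OF assms(2) refl] by blast
  then show ?thesis
    using assms(4) by (intro integrable_const_bound[where B=C]) auto
qed

lemma tendsto_integral_infdist_cutoff:
  fixes C :: "'a::metric_space set"
  assumes M: "prob_space M" "sets M = sets borel" and C: "closed C" "C \<noteq> {}"
  shows "(\<lambda>j. \<integral>x. max 0 (1 - real j * infdist x C) \<partial>M) \<longlonglongrightarrow> measure M C"
proof -
  interpret prob_space M by fact
  define g where "g = (\<lambda>(j::nat) x. max 0 (1 - real j * infdist x C))"
  have "(\<lambda>j. g j x) \<longlonglongrightarrow> indicator C x" for x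
  proof (cases "x \<in> C")
    case True
    then show ?thesis using in_closed_iff_infdist_zero[OF C] by (simp add: g_def)
  next
    case False
    then have pos: "infdist x C > 0"
      using in_closed_iff_infdist_zero[OF C] infdist_nonneg[of x C] by simp
    obtain N :: nat where N: "1 / infdist x C < real N" using reals_Archimedean2 by blast
    have "g j x = 0" if "N \<le> j" for j
    proof -
      have "1 < real N * infdist x C" using N pos by (simp add: field_simps)
      also have "\<dots> \<le> real j * infdist x C" using that pos by (intro mult_right_mono) auto
      finally show ?thesis by (simp add: g_def)
    qed
    then show ?thesis
      using False by (intro tendsto_eventually) (auto simp: eventually_sequentially)
  qed
  moreover have "g j \<in> borel_measurable M" for j
  proof -
    have "continuous_on UNIV (g j)" unfolding g_def by (intro continuous_intros)
    then show ?thesis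
      using borel_measurable_continuous_onI measurable_cong_sets[OF M(2) refl] by blast
  qed
  moreover have "indicator C \<in> borel_measurable M"
    using borel_measurable_indicator[OF borel_closed[OF C(1)]] measurable_cong_sets[OF M(2) refl]
    by blast
  moreover have "norm (g j x) \<le> 1" for j x
    using infdist_nonneg[of x C] by (simp add: g_def)
  ultimately have "(\<lambda>j. integral\<^sup>L M (g j)) \<longlonglongrightarrow> integral\<^sup>L M (indicator C)"
    by (intro integral_dominated_convergence[where w="\<lambda>_. 1"]) auto
  then show ?thesis
    using sets_eq_imp_space_eq[OF M(2)] by (simp add: g_def)
qed

lemma prob_space_eqI_integral_continuous:
  fixes \<mu> \<nu> :: "'a::metric_space measure"
  assumes \<mu>: "prob_space \<mu>" "sets \<mu> = sets borel" and \<nu>: "prob_space \<nu>" "sets \<nu> = sets borel"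
    and eq: "\<And>f :: 'a \<Rightarrow> real. continuous_on UNIV f \<Longrightarrow> (\<And>x. \<bar>f x\<bar> \<le> 1) \<Longrightarrow> integral\<^sup>L \<mu> f = integral\<^sup>L \<nu> f"
  shows "\<mu> = \<nu>"
proof -
  interpret \<mu>: prob_space \<mu> by fact
  interpret \<nu>: prob_space \<nu> by fact
  have "emeasure \<mu> C = emeasure \<nu> C" if C: "closed C" for C :: "'a set"
  proof (cases "C = {}")
    case False
    have "(\<integral>x. max 0 (1 - real j * infdist x C) \<partial>\<mu>) = (\<integral>x. max 0 (1 - real j * infdist x C) \<partial>\<nu>)"
      for j
      by (rule eq) (auto intro!: continuous_intros simp: infdist_nonneg)
    then have "measure \<mu> C = measure \<nu> C"
      using LIMSEQ_unique[OF tendsto_integral_infdist_cutoff[OF \<mu> C False]]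
        tendsto_integral_infdist_cutoff[OF \<nu> C False] by simp
    then show ?thesis
      by (simp add: \<mu>.emeasure_eq_measure \<nu>.emeasure_eq_measure)
  qed simp
  moreover have "sets (borel :: 'a measure) = sigma_sets UNIV (Collect closed)"
    by (subst borel_eq_closed) (simp add: sets_measure_of)
  moreover have "Int_stable (Collect closed :: 'a set set)"
    by (auto simp: Int_stable_def)
  ultimately show ?thesis
    using \<mu>(2) \<nu>(2)
      sets_eq_imp_space_eq[OF \<mu>(2)] sets_eq_imp_space_eq[OF \<nu>(2)]
    by (intro measure_eqI_generator_eq[where E="Collect closed" and \<Omega>=UNIV and A="\<lambda>_. UNIV"]) auto
qed

definition tent :: "real \<Rightarrow> 'a::metric_space \<Rightarrow> 'a \<Rightarrow> real" where
  "tent \<delta> x y = max 0 (\<delta> - dist x y)"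

lemma tent_nonneg: "0 \<le> tent \<delta> x y"
  by (simp add: tent_def)

lemma tent_le: "tent \<delta> x y \<le> \<bar>\<delta>\<bar>"
  unfolding tent_def
  by (intro max.boundedI) (use zero_le_dist[of x y] abs_ge_self[of \<delta>] abs_ge_zero[of \<delta>] in linarith)+

lemma abs_tent [simp]: "\<bar>tent \<delta> x y\<bar> = tent \<delta> x y"
  by (simp add: tent_nonneg)

lemma abs_tent_mult_le:
  assumes "\<And>y. \<bar>g y\<bar> \<le> B"
  shows "\<bar>tent \<delta> x y * g y\<bar> \<le> \<bar>\<delta>\<bar> * B"
  unfolding abs_mult abs_tent
  using assms[of y] tent_nonneg tent_le abs_ge_zero by (intro mult_mono) (auto intro: order_trans)

lemma tent_commute: "tent \<delta> x y = tent \<delta> y x"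
  by (simp add: tent_def dist_commute)

lemma tent_pos_iff: "0 < tent \<delta> x y \<longleftrightarrow> dist x y < \<delta>"
  by (simp add: tent_def less_max_iff_disj)

lemma abs_tent_diff_le: "\<bar>tent \<delta> x z - tent \<delta> y z\<bar> \<le> dist x y"
  using dist_triangle[of x z y] dist_triangle[of y z x]
  by (simp add: tent_def dist_commute max_def abs_if)

lemma continuous_on_tent [continuous_intros]:
  "continuous_on S f \<Longrightarrow> continuous_on S g \<Longrightarrow> continuous_on S (\<lambda>z. tent \<delta> (f z) (g z))"
  unfolding tent_def by (intro continuous_intros)

lemma integrable_tent:
  assumes "prob_space M" "sets M = sets borel"
  shows "integrable M (tent \<delta> x)"
  by (intro integrable_bounded_continuous[OF prob_space.finite_measure[OF assms(1)] assms(2),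
      where C="\<bar>\<delta>\<bar>"] continuous_intros) (simp_all add: abs_of_nonneg tent_nonneg tent_le)

lemma continuous_on_integral_tent:
  fixes M :: "'a::metric_space measure"
  assumes M: "prob_space M" "sets M = sets borel"
  shows "continuous_on UNIV (\<lambda>x. \<integral>y. tent \<delta> x y \<partial>M)"
proof (rule lipschitz_on_continuous_on)
  interpret prob_space M by fact
  have "\<bar>(\<integral>z. tent \<delta> x z \<partial>M) - (\<integral>z. tent \<delta> y z \<partial>M)\<bar> \<le> dist x y" for x y
  proof -
    have "\<bar>(\<integral>z. tent \<delta> x z \<partial>M) - (\<integral>z. tent \<delta> y z \<partial>M)\<bar> = \<bar>\<integral>z. tent \<delta> x z - tent \<delta> y z \<partial>M\<bar>"
      using integrable_tent[OF M] by simp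
    also have "\<dots> \<le> (\<integral>z. \<bar>tent \<delta> x z - tent \<delta> y z\<bar> \<partial>M)"
      by (rule integral_abs_bound)
    also have "\<dots> \<le> (\<integral>z. dist x y \<partial>M)"
      using integrable_tent[OF M] abs_tent_diff_le by (intro integral_mono) auto
    finally show ?thesis by (simp add: prob_space)
  qed
  then show "1-lipschitz_on UNIV (\<lambda>x. \<integral>y. tent \<delta> x y \<partial>M)"
    by (intro lipschitz_onI) (auto simp: dist_real_def)
qed

lemma integral_tent_isometry:
  fixes M :: "'a::metric_space measure"
  assumes M: "sets M = sets borel" and T: "\<And>u v. dist (T u) (T v) = dist u v"
    and inv: "distr M borel T = M"
  shows "(\<integral>y. tent \<delta> (T x) y \<partial>M) = (\<integral>y. tent \<delta> x y \<partial>M)"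
proof -
  have "continuous_on UNIV T"
    using T by (intro lipschitz_on_continuous_on[where L=1] lipschitz_onI) auto
  then have "T \<in> measurable M borel"
    using borel_measurable_continuous_onI measurable_cong_sets[OF M refl] by blast
  moreover have "tent \<delta> (T x) \<in> borel_measurable borel"
    by (intro borel_measurable_continuous_onI continuous_intros)
  ultimately have "(\<integral>y. tent \<delta> (T x) y \<partial>distr M borel T) = (\<integral>y. tent \<delta> (T x) (T y) \<partial>M)"
    by (rule integral_distr)
  then show ?thesis using inv T by (simp add: tent_def)
qed

lemma integral_tent_const_pos:
  fixes M :: "'a::metric_space measure"
  assumes M: "prob_space M" "sets M = sets borel" and S: "compact S" "AE y in M. y \<in> S"
    and \<delta>: "0 < \<delta>" and c: "\<And>x. x \<in> S \<Longrightarrow> (\<integral>y. tent \<delta> x y \<partial>M) = c"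
  shows "0 < c"
proof (rule ccontr)
  assume "\<not> 0 < c"
  have null: "AE y in M. tent \<delta> x y = 0" if "x \<in> S" for x
  proof -
    have "0 \<le> (\<integral>y. tent \<delta> x y \<partial>M)" by (simp add: tent_nonneg)
    then have "(\<integral>y. tent \<delta> x y \<partial>M) = 0" using c[OF that] \<open>\<not> 0 < c\<close> by simp
    then show ?thesis
      using integral_nonneg_eq_0_iff_AE[OF integrable_tent[OF M], of \<delta> x] by (simp add: tent_nonneg)
  qed
  have "S \<subseteq> (\<Union>x\<in>S. ball x \<delta>)" using \<delta> by force
  then obtain X where X: "X \<subseteq> S" "finite X" "S \<subseteq> (\<Union>x\<in>X. ball x \<delta>)"
    using compactE_image[OF S(1), of S "\<lambda>x. ball x \<delta>"] by blast
  have "AE y in M. \<forall>x\<in>X. tent \<delta> x y = 0"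
    using X(1,2) null by (intro AE_finite_allI) auto
  with S(2) have "AE y in M. False"
  proof eventually_elim
    case (elim y)
    then obtain x where "x \<in> X" "dist x y < \<delta>" using X(3) by auto
    then show False using elim tent_pos_iff[of \<delta> x y] by simp
  qed
  then show False using prob_space.AE_False[OF M(1)] by simp
qed

lemma integral_tent_Fubini:
  fixes \<mu> \<nu> :: "'a::euclidean_space measure"
  assumes \<mu>: "prob_space \<mu>" "sets \<mu> = sets borel" and \<nu>: "prob_space \<nu>" "sets \<nu> = sets borel"
    and g: "continuous_on UNIV g" "\<And>x. \<bar>g x\<bar> \<le> B"
  shows "(\<integral>y. g y * (\<integral>x. tent \<delta> y x \<partial>\<mu>) \<partial>\<nu>) = (\<integral>x. (\<integral>y. tent \<delta> x y * g y \<partial>\<nu>) \<partial>\<mu>)"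
    and "integrable \<mu> (\<lambda>x. \<integral>y. tent \<delta> x y * g y \<partial>\<nu>)"
proof -
  interpret P: pair_sigma_finite \<mu> \<nu>
    by (intro pair_sigma_finite.intro prob_space_imp_sigma_finite \<mu>(1) \<nu>(1))
  define G where "G p = tent \<delta> (fst p) (snd p) * g (snd p)" for p
  have "sets (\<mu> \<Otimes>\<^sub>M \<nu>) = sets (borel :: ('a \<times> 'a) measure)"
    using sets_pair_measure_cong[OF \<mu>(2) \<nu>(2)] by (metis borel_prod)
  moreover have "continuous_on UNIV G"
    unfolding G_def by (intro continuous_intros continuous_on_compose2[OF g(1)]) auto
  moreover have "\<bar>G p\<bar> \<le> \<bar>\<delta>\<bar> * B" for p
    unfolding G_def by (rule abs_tent_mult_le[OF g(2)])
  ultimately have G: "integrable (\<mu> \<Otimes>\<^sub>M \<nu>) G"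
    using prob_space.finite_measure[OF prob_space_pair[OF \<mu>(1) \<nu>(1)]]
    by (intro integrable_bounded_continuous) auto
  have "(\<integral>y. g y * (\<integral>x. tent \<delta> y x \<partial>\<mu>) \<partial>\<nu>) = (\<integral>y. (\<integral>x. G (x, y) \<partial>\<mu>) \<partial>\<nu>)"
    by (simp add: G_def tent_commute mult.commute)
  also have "\<dots> = (\<integral>x. (\<integral>y. G (x, y) \<partial>\<nu>) \<partial>\<mu>)"
    using P.Fubini_integral[of "\<lambda>x y. G (x, y)"] G by simp
  finally show "(\<integral>y. g y * (\<integral>x. tent \<delta> y x \<partial>\<mu>) \<partial>\<nu>) = (\<integral>x. (\<integral>y. tent \<delta> x y * g y \<partial>\<nu>) \<partial>\<mu>)"
    by (simp add: G_def)
  show "integrable \<mu> (\<lambda>x. \<integral>y. tent \<delta> x y * g y \<partial>\<nu>)"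
    using P.integrable_fst'[OF G] by (simp add: G_def)
qed

lemma integral_tent_smoothing_error:
  fixes M :: "'a::metric_space measure"
  assumes M: "prob_space M" "sets M = sets borel" "AE y in M. y \<in> S"
    and f: "continuous_on UNIV f" "\<And>y. \<bar>f y\<bar> \<le> B"
    and close: "\<And>y. y \<in> S \<Longrightarrow> dist x y < \<delta> \<Longrightarrow> \<bar>f y - f x\<bar> \<le> e"
  shows "\<bar>(\<integral>y. tent \<delta> x y * f y \<partial>M) - f x * (\<integral>y. tent \<delta> x y \<partial>M)\<bar> \<le> e * (\<integral>y. tent \<delta> x y \<partial>M)"
proof -
  interpret prob_space M by fact
  have int: "integrable M (\<lambda>y. tent \<delta> x y * f y)"
    using M f(1) abs_tent_mult_le[OF f(2)]
    by (intro integrable_bounded_continuous continuous_intros) auto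
  have "(\<integral>y. tent \<delta> x y * f y \<partial>M) - f x * (\<integral>y. tent \<delta> x y \<partial>M)
      = (\<integral>y. tent \<delta> x y * f y - f x * tent \<delta> x y \<partial>M)"
    using int integrable_tent[OF M(1,2)] by simp
  also have "\<bar>\<dots>\<bar> \<le> (\<integral>y. \<bar>tent \<delta> x y * f y - f x * tent \<delta> x y\<bar> \<partial>M)"
    by (rule integral_abs_bound)
  also have "\<dots> \<le> (\<integral>y. e * tent \<delta> x y \<partial>M)"
  proof (rule integral_mono_AE)
    show "AE y in M. \<bar>tent \<delta> x y * f y - f x * tent \<delta> x y\<bar> \<le> e * tent \<delta> x y"
      using M(3)
    proof eventually_elim
      case (elim y)
      have "tent \<delta> x y * f y - f x * tent \<delta> x y = tent \<delta> x y * (f y - f x)"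
        by (simp add: algebra_simps)
      then have "\<bar>tent \<delta> x y * f y - f x * tent \<delta> x y\<bar> = tent \<delta> x y * \<bar>f y - f x\<bar>"
        by (simp add: abs_mult)
      also have "\<dots> \<le> tent \<delta> x y * e"
        using close[OF elim] tent_pos_iff[of \<delta> x y] tent_nonneg[of \<delta> x y]
        by (cases "0 < tent \<delta> x y") (auto intro: mult_left_mono)
      finally show ?case by (simp add: mult.commute)
    qed
  qed (use int integrable_tent[OF M(1,2)] in auto)
  finally show ?thesis by simp
qed

lemma integral_tent_const_eq:
  fixes \<mu> \<nu> :: "'a::euclidean_space measure"
  assumes \<mu>: "prob_space \<mu>" "sets \<mu> = sets borel" "AE x in \<mu>. x \<in> S"
    and \<nu>: "prob_space \<nu>" "sets \<nu> = sets borel" "AE x in \<nu>. x \<in> S"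
    and a: "\<And>x. x \<in> S \<Longrightarrow> (\<integral>y. tent \<delta> x y \<partial>\<mu>) = a"
    and b: "\<And>x. x \<in> S \<Longrightarrow> (\<integral>y. tent \<delta> x y \<partial>\<nu>) = b"
  shows "a = b"
proof -
  interpret \<mu>: prob_space \<mu> by fact
  interpret \<nu>: prob_space \<nu> by fact
  have "(\<lambda>x. \<integral>y. tent \<delta> x y \<partial>\<mu>) \<in> borel_measurable \<nu>"
    unfolding measurable_cong_sets[OF \<nu>(2) refl]
    by (rule borel_measurable_continuous_onI[OF continuous_on_integral_tent[OF \<mu>(1,2)]])
  moreover have "(\<lambda>x. \<integral>y. tent \<delta> x y \<partial>\<nu>) \<in> borel_measurable \<mu>"
    unfolding measurable_cong_sets[OF \<mu>(2) refl]
    by (rule borel_measurable_continuous_onI[OF continuous_on_integral_tent[OF \<nu>(1,2)]])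
  moreover have "AE y in \<nu>. 1 * (\<integral>x. tent \<delta> y x \<partial>\<mu>) = a"
    using \<nu>(3) by eventually_elim (simp add: a)
  moreover have "AE x in \<mu>. (\<integral>y. tent \<delta> x y * 1 \<partial>\<nu>) = b"
    using \<mu>(3) by eventually_elim (simp add: b)
  ultimately have "(\<integral>y. 1 * (\<integral>x. tent \<delta> y x \<partial>\<mu>) \<partial>\<nu>) = (\<integral>y. a \<partial>\<nu>)"
    "(\<integral>x. (\<integral>y. tent \<delta> x y * 1 \<partial>\<nu>) \<partial>\<mu>) = (\<integral>x. b \<partial>\<mu>)"
    by (intro integral_cong_AE; simp)+
  then show ?thesis
    using integral_tent_Fubini(1)[OF \<mu>(1,2) \<nu>(1,2), of "\<lambda>_. 1" 1]
    by (simp add: \<mu>.prob_space \<nu>.prob_space)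
qed

text \<open>Smoothing with the tent kernel turns both integrals of \<open>f\<close> into the same double integral,
  up to the modulus of continuity of \<open>f\<close> at scale \<open>\<delta>\<close>.\<close>

lemma integral_diff_le_tent_const:
  fixes \<mu> \<nu> :: "'a::euclidean_space measure" and f :: "'a \<Rightarrow> real"
  assumes \<mu>: "prob_space \<mu>" "sets \<mu> = sets borel" "AE x in \<mu>. x \<in> S"
    and \<nu>: "prob_space \<nu>" "sets \<nu> = sets borel" "AE x in \<nu>. x \<in> S"
    and c: "0 < c" "\<And>x. x \<in> S \<Longrightarrow> (\<integral>y. tent \<delta> x y \<partial>\<mu>) = c"
      "\<And>x. x \<in> S \<Longrightarrow> (\<integral>y. tent \<delta> x y \<partial>\<nu>) = c"
    and f: "continuous_on UNIV f" "\<And>x. \<bar>f x\<bar> \<le> B"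
    and close: "\<And>x y. x \<in> S \<Longrightarrow> y \<in> S \<Longrightarrow> dist x y < \<delta> \<Longrightarrow> \<bar>f y - f x\<bar> \<le> e"
  shows "\<bar>integral\<^sup>L \<mu> f - integral\<^sup>L \<nu> f\<bar> \<le> e"
proof -
  interpret \<mu>: prob_space \<mu> by fact
  interpret \<nu>: prob_space \<nu> by fact
  define \<Phi> where "\<Phi> = (\<lambda>x. \<integral>y. tent \<delta> x y * f y \<partial>\<nu>)"
  have int: "integrable \<mu> \<Phi>" "integrable \<mu> f"
    using integral_tent_Fubini(2)[OF \<mu>(1,2) \<nu>(1,2) f] integrable_bounded_continuous[OF _ \<mu>(2) f]
    by (simp_all add: \<Phi>_def)
  have "(\<lambda>y. f y * (\<integral>x. tent \<delta> y x \<partial>\<mu>)) \<in> borel_measurable \<nu>"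
    unfolding measurable_cong_sets[OF \<nu>(2) refl]
    by (intro borel_measurable_continuous_onI continuous_on_mult f(1) continuous_on_integral_tent \<mu>(1,2))
  then have "(\<integral>y. f y * (\<integral>x. tent \<delta> y x \<partial>\<mu>) \<partial>\<nu>) = (\<integral>y. f y * c \<partial>\<nu>)"
    using \<nu>(3) c(2) borel_measurable_continuous_onI[OF f(1)] measurable_cong_sets[OF \<nu>(2) refl]
    by (intro integral_cong_AE) (auto intro!: borel_measurable_times)
  then have "c * integral\<^sup>L \<nu> f = integral\<^sup>L \<mu> \<Phi>"
    using integral_tent_Fubini(1)[OF \<mu>(1,2) \<nu>(1,2) f] by (simp add: \<Phi>_def mult.commute)
  then have "c * (integral\<^sup>L \<nu> f - integral\<^sup>L \<mu> f) = (\<integral>x. \<Phi> x - f x * c \<partial>\<mu>)"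
    using int by (simp add: algebra_simps)
  also have "\<bar>\<dots>\<bar> \<le> (\<integral>x. \<bar>\<Phi> x - f x * c\<bar> \<partial>\<mu>)"
    by (rule integral_abs_bound)
  also have "\<dots> \<le> (\<integral>x. e * c \<partial>\<mu>)"
  proof (rule integral_mono_AE)
    show "AE x in \<mu>. \<bar>\<Phi> x - f x * c\<bar> \<le> e * c"
      using \<mu>(3)
    proof eventually_elim
      case (elim x)
      show ?case
        using integral_tent_smoothing_error[OF \<nu> f, where x=x and \<delta>=\<delta> and e=e] close[OF elim]
          c(3)[OF elim] unfolding \<Phi>_def by simp
    qed
  qed (use int in simp_all)
  also have "\<dots> = e * c" by (simp add: \<mu>.prob_space)
  finally show ?thesis
    using c(1) by (simp add: abs_mult abs_minus_commute)
qed

lemma prob_measures_eq_transitive_isometries: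
  fixes \<mu> \<nu> :: "'a::euclidean_space measure"
  assumes \<mu>: "prob_space \<mu>" "sets \<mu> = sets borel" "AE x in \<mu>. x \<in> S"
    and \<nu>: "prob_space \<nu>" "sets \<nu> = sets borel" "AE x in \<nu>. x \<in> S"
    and S: "compact S"
    and transitive: "\<And>x y. x \<in> S \<Longrightarrow> y \<in> S \<Longrightarrow> \<exists>T. (\<forall>u v. dist (T u) (T v) = dist u v) \<and>
        T x = y \<and> distr \<mu> borel T = \<mu> \<and> distr \<nu> borel T = \<nu>"
  shows "\<mu> = \<nu>"
proof (rule prob_space_eqI_integral_continuous[OF \<mu>(1,2) \<nu>(1,2)])
  fix f :: "'a \<Rightarrow> real" assume f: "continuous_on UNIV f" "\<And>x. \<bar>f x\<bar> \<le> 1"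
  obtain x0 where x0: "x0 \<in> S"
    using \<mu>(3) prob_space.AE_False[OF \<mu>(1)] by (metis (mono_tags) eventually_mono ex_in_conv)
  have "\<bar>integral\<^sup>L \<mu> f - integral\<^sup>L \<nu> f\<bar> \<le> e" if "0 < e" for e
  proof -
    obtain \<delta> where \<delta>: "0 < \<delta>" "\<And>x y. x \<in> S \<Longrightarrow> y \<in> S \<Longrightarrow> dist x y < \<delta> \<Longrightarrow> \<bar>f y - f x\<bar> \<le> e"
      using compact_uniformly_continuous[OF continuous_on_subset[OF f(1)] S] \<open>0 < e\<close>
      unfolding uniformly_continuous_on_def dist_real_def
      by (metis dist_commute less_eq_real_def subset_UNIV)
    have const: "(\<integral>y. tent \<delta> x y \<partial>\<mu>) = (\<integral>y. tent \<delta> x0 y \<partial>\<mu>)"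
      "(\<integral>y. tent \<delta> x y \<partial>\<nu>) = (\<integral>y. tent \<delta> x0 y \<partial>\<nu>)" if "x \<in> S" for x
      using transitive[OF x0 that] integral_tent_isometry[OF \<mu>(2)] integral_tent_isometry[OF \<nu>(2)]
      by metis+
    moreover have "0 < (\<integral>y. tent \<delta> x0 y \<partial>\<nu>)"
      using integral_tent_const_pos[OF \<nu>(1,2) S \<nu>(3) \<delta>(1)] const(2) by blast
    moreover have "(\<integral>y. tent \<delta> x0 y \<partial>\<mu>) = (\<integral>y. tent \<delta> x0 y \<partial>\<nu>)"
      using integral_tent_const_eq[OF \<mu> \<nu>] const by blast
    ultimately show ?thesis
      using integral_diff_le_tent_const[OF \<mu> \<nu> _ _ _ f, where \<delta>=\<delta> and c="\<integral>y. tent \<delta> x0 y \<partial>\<nu>"]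
        \<delta>(2) by simp
  qed
  then show "integral\<^sup>L \<mu> f = integral\<^sup>L \<nu> f"
    using dense_eq0_I[of "integral\<^sup>L \<mu> f - integral\<^sup>L \<nu> f"] by simp
qed

section \<open>Haar measure on the unit sphere of a subspace\<close>

definition is_haar_sphere :: "'a::euclidean_space set \<Rightarrow> 'a measure \<Rightarrow> bool" where
  "is_haar_sphere E \<mu> \<longleftrightarrow>
     sets \<mu> = sets (restrict_space borel (sphere 0 1 \<inter> E)) \<and> prob_space \<mu> \<and>
     (\<forall>T. orthogonal_transformation T \<and> T ` E = E \<longrightarrow>
        (\<forall>A \<in> sets \<mu>. emeasure \<mu> (T -` A \<inter> space \<mu>) = emeasure \<mu> A))"

lemma haar_sphere_eq_The: "haar_sphere E = (THE \<mu>. is_haar_sphere E \<mu>)"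
  by (simp add: haar_sphere_def is_haar_sphere_def)

lemma space_is_haar_sphere:
  assumes "is_haar_sphere E \<mu>"
  shows "space \<mu> = sphere 0 1 \<inter> E"
proof -
  have "space \<mu> = space (restrict_space borel (sphere 0 1 \<inter> E))"
    using assms unfolding is_haar_sphere_def by (intro sets_eq_imp_space_eq) simp
  then show ?thesis by (simp add: space_restrict_space)
qed

lemma measurable_orthogonal_transformation:
  fixes T :: "'a::euclidean_space \<Rightarrow> 'a"
  shows "orthogonal_transformation T \<Longrightarrow> T \<in> borel_measurable borel"
  by (intro borel_measurable_continuous_onI linear_continuous_on)
     (metis orthogonal_transformation_linear linear_conv_bounded_linear)

lemma orthogonal_transformation_sphere_Int:
  "orthogonal_transformation T \<Longrightarrow> T ` E = E \<Longrightarrow> x \<in> sphere 0 1 \<inter> E \<Longrightarrow> T x \<in> sphere 0 1 \<inter> E"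
  by (auto simp: orthogonal_transformation_norm)

lemma measurable_restrict_sphere_Int:
  fixes L :: "'a::euclidean_space \<Rightarrow> 'b::euclidean_space"
  assumes "linear L" "\<And>x. x \<in> sphere 0 1 \<inter> F \<Longrightarrow> L x \<in> sphere 0 1 \<inter> E"
  shows "L \<in> measurable (restrict_space borel (sphere 0 1 \<inter> F)) (restrict_space borel (sphere 0 1 \<inter> E))"
  using assms
  by (intro measurable_restrict_space3 borel_measurable_continuous_onI linear_continuous_on)
     (auto simp: linear_conv_bounded_linear)

lemma measurable_id_is_haar_sphere: "is_haar_sphere E \<mu> \<Longrightarrow> (\<lambda>x. x) \<in> measurable \<mu> borel"
  unfolding is_haar_sphere_def
  using measurable_cong_sets measurable_restrict_space1[OF measurable_ident_sets[OF refl]] by blast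

lemma sets_is_haar_sphere_iff:
  assumes E: "subspace E" and \<mu>: "is_haar_sphere E \<mu>"
  shows "A \<in> sets \<mu> \<longleftrightarrow> A \<subseteq> sphere 0 1 \<inter> E \<and> A \<in> sets borel"
proof -
  have "sphere 0 1 \<inter> E \<in> sets borel"
    by (intro borel_closed closed_Int closed_sphere closed_subspace[OF E])
  then show ?thesis
    using \<mu> sets_restrict_space_iff[of "sphere 0 1 \<inter> E" borel A] by (simp add: is_haar_sphere_def)
qed

lemma emeasure_distr_id_is_haar_sphere:
  assumes \<mu>: "is_haar_sphere E \<mu>" and A: "A \<in> sets borel"
  shows "emeasure (distr \<mu> borel (\<lambda>x. x)) A = emeasure \<mu> (A \<inter> (sphere 0 1 \<inter> E))"
  using emeasure_distr[OF measurable_id_is_haar_sphere[OF \<mu>] A] space_is_haar_sphere[OF \<mu>]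
  by (simp add: Int_commute)

lemma is_haar_sphere_borel_extension:
  fixes \<mu> :: "'a::euclidean_space measure"
  assumes E: "subspace E" and \<mu>: "is_haar_sphere E \<mu>"
  defines "\<mu>' \<equiv> distr \<mu> borel (\<lambda>x. x)"
  shows "sets \<mu>' = sets borel" "prob_space \<mu>'" "AE x in \<mu>'. x \<in> sphere 0 1 \<inter> E"
    and "\<And>A. A \<in> sets \<mu> \<Longrightarrow> emeasure \<mu>' A = emeasure \<mu> A"
proof -
  let ?S = "sphere 0 1 \<inter> E"
  have id: "(\<lambda>x. x) \<in> measurable \<mu> borel" by (rule measurable_id_is_haar_sphere[OF \<mu>])
  show "sets \<mu>' = sets borel" by (simp add: \<mu>'_def)
  show "prob_space \<mu>'"
    unfolding \<mu>'_def using \<mu> by (intro prob_space.prob_space_distr[OF _ id]) (simp add: is_haar_sphere_def)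
  show "AE x in \<mu>'. x \<in> ?S"
    unfolding \<mu>'_def
  proof (subst AE_distr_iff[OF id])
    have "?S \<in> sets borel" by (intro borel_closed closed_Int closed_sphere closed_subspace[OF E])
    then show "{x \<in> space borel. x \<in> ?S} \<in> sets borel"
      by (simp only: space_borel UNIV_I simp_thms Collect_mem_eq)
    show "AE x in \<mu>. x \<in> ?S" using space_is_haar_sphere[OF \<mu>] by (intro AE_I2) simp
  qed
  show "emeasure \<mu>' A = emeasure \<mu> A" if "A \<in> sets \<mu>" for A
    using that sets_is_haar_sphere_iff[OF E \<mu>, of A] emeasure_distr_id_is_haar_sphere[OF \<mu>, of A]
    by (simp add: \<mu>'_def Int_absorb2)
qed

lemma distr_is_haar_sphere_borel_extension:
  fixes \<mu> :: "'a::euclidean_space measure"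
  assumes E: "subspace E" and \<mu>: "is_haar_sphere E \<mu>" and T: "orthogonal_transformation T" "T ` E = E"
  defines "\<mu>' \<equiv> distr \<mu> borel (\<lambda>x. x)"
  shows "distr \<mu>' borel T = \<mu>'"
proof (rule measure_eqI)
  let ?S = "sphere 0 1 \<inter> E"
  show "sets (distr \<mu>' borel T) = sets \<mu>'" by (simp add: \<mu>'_def)
  fix A assume "A \<in> sets (distr \<mu>' borel T)"
  then have A: "A \<in> sets borel" by simp
  have Tm: "T \<in> borel_measurable borel" by (rule measurable_orthogonal_transformation[OF T(1)])
  then have TA: "T -` A \<in> sets borel" using A by (simp add: measurable_sets_borel)
  have "emeasure (distr \<mu>' borel T) A = emeasure \<mu>' (T -` A)"
    using emeasure_distr[of T \<mu>' borel A] Tm A by (simp add: \<mu>'_def)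
  also have "\<dots> = emeasure \<mu> (T -` A \<inter> ?S)"
    unfolding \<mu>'_def by (rule emeasure_distr_id_is_haar_sphere[OF \<mu> TA])
  also have "T -` A \<inter> ?S = T -` (A \<inter> ?S) \<inter> space \<mu>"
    using orthogonal_transformation_sphere_Int[OF T] space_is_haar_sphere[OF \<mu>] by auto
  also have "emeasure \<mu> \<dots> = emeasure \<mu> (A \<inter> ?S)"
  proof -
    have "?S \<in> sets borel" by (intro borel_closed closed_Int closed_sphere closed_subspace[OF E])
    then have "A \<inter> ?S \<in> sets \<mu>" using sets_is_haar_sphere_iff[OF E \<mu>] A by auto
    then show ?thesis using \<mu> T unfolding is_haar_sphere_def by blast
  qed
  also have "\<dots> = emeasure \<mu>' A"
    unfolding \<mu>'_def by (rule emeasure_distr_id_is_haar_sphere[OF \<mu> A, symmetric])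
  finally show "emeasure (distr \<mu>' borel T) A = emeasure \<mu>' A" .
qed

lemma is_haar_sphere_unique:
  fixes E :: "'a::euclidean_space set"
  assumes E: "subspace E" and \<mu>: "is_haar_sphere E \<mu>" and \<nu>: "is_haar_sphere E \<nu>"
  shows "\<mu> = \<nu>"
proof -
  let ?S = "sphere 0 1 \<inter> E"
  note \<mu>' = is_haar_sphere_borel_extension[OF E \<mu>]
  note \<nu>' = is_haar_sphere_borel_extension[OF E \<nu>]
  have "distr \<mu> borel (\<lambda>x. x) = distr \<nu> borel (\<lambda>x. x)"
  proof (rule prob_measures_eq_transitive_isometries[OF \<mu>'(2,1,3) \<nu>'(2,1,3)])
    show "compact ?S" using closed_subspace[OF E] by (intro compact_Int_closed) auto
    fix x y assume "x \<in> ?S" "y \<in> ?S"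
    then obtain T where T: "orthogonal_transformation T" "T ` E = E" "T x = y"
      using orthogonal_transformation_onto_subspace_point[OF E E refl, of x y] by auto
    have iso: "dist (T u) (T v) = dist u v" for u v
      using T(1) by (simp add: dist_norm orthogonal_transformation_norm
          flip: linear_diff[OF orthogonal_transformation_linear[OF T(1)]])
    show "\<exists>T. (\<forall>u v. dist (T u) (T v) = dist u v) \<and> T x = y \<and>
        distr (distr \<mu> borel (\<lambda>x. x)) borel T = distr \<mu> borel (\<lambda>x. x) \<and>
        distr (distr \<nu> borel (\<lambda>x. x)) borel T = distr \<nu> borel (\<lambda>x. x)"
      using iso T(3) distr_is_haar_sphere_borel_extension[OF E \<mu> T(1,2)]
        distr_is_haar_sphere_borel_extension[OF E \<nu> T(1,2)] by (intro exI[of _ T] conjI allI) simp_all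
  qed
  moreover have "sets \<mu> = sets \<nu>" using \<mu> \<nu> by (simp add: is_haar_sphere_def)
  ultimately show ?thesis
    using \<mu>'(4) \<nu>'(4) by (intro measure_eqI) auto
qed

lemma is_haar_sphere_distr:
  fixes L :: "'b::euclidean_space \<Rightarrow> 'a::euclidean_space"
  assumes \<sigma>: "is_haar_sphere F \<sigma>"
    and L: "linear L" "\<And>y. y \<in> sphere 0 1 \<inter> F \<Longrightarrow> L y \<in> sphere 0 1 \<inter> E"
    and lift: "\<And>T. orthogonal_transformation T \<Longrightarrow> T ` E = E \<Longrightarrow>
        \<exists>T'. orthogonal_transformation T' \<and> T' ` F = F \<and> (\<forall>y\<in>F. L (T' y) = T (L y))"
  shows "is_haar_sphere E (distr \<sigma> (restrict_space borel (sphere 0 1 \<inter> E)) L)"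
  unfolding is_haar_sphere_def
proof (intro conjI allI impI ballI)
  let ?SE = "sphere 0 1 \<inter> E" and ?SF = "sphere 0 1 \<inter> F"
  let ?\<nu> = "distr \<sigma> (restrict_space borel ?SE) L"
  have sets: "sets \<sigma> = sets (restrict_space borel ?SF)" and prob: "prob_space \<sigma>"
    and inv: "\<And>T A. orthogonal_transformation T \<Longrightarrow> T ` F = F \<Longrightarrow> A \<in> sets \<sigma> \<Longrightarrow>
        emeasure \<sigma> (T -` A \<inter> space \<sigma>) = emeasure \<sigma> A"
    using \<sigma> unfolding is_haar_sphere_def by auto
  have space: "space \<sigma> = ?SF" by (rule space_is_haar_sphere[OF \<sigma>])
  have Lm: "L \<in> measurable \<sigma> (restrict_space borel ?SE)"
    using measurable_restrict_sphere_Int[OF L] measurable_cong_sets[OF sets refl] by blast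
  show "sets ?\<nu> = sets (restrict_space borel ?SE)" by simp
  show "prob_space ?\<nu>" by (rule prob_space.prob_space_distr[OF prob Lm])
  fix T A assume "orthogonal_transformation T \<and> T ` E = E" and A: "A \<in> sets ?\<nu>"
  then have T: "orthogonal_transformation T" "T ` E = E" by auto
  obtain T' where T': "orthogonal_transformation T'" "T' ` F = F" "\<And>y. y \<in> F \<Longrightarrow> L (T' y) = T (L y)"
    using lift[OF T] by blast
  have A: "A \<in> sets (restrict_space borel ?SE)" using A by simp
  have TA: "T -` A \<inter> ?SE \<in> sets (restrict_space borel ?SE)"
    using measurable_sets[OF measurable_restrict_sphere_Int[OF orthogonal_transformation_linear[OF T(1)]
          orthogonal_transformation_sphere_Int[OF T]] A]
    by (simp add: space_restrict_space)
  have LA: "L -` A \<inter> space \<sigma> \<in> sets \<sigma>" by (rule measurable_sets[OF Lm A])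
  have "L -` (T -` A \<inter> ?SE) \<inter> space \<sigma> = T' -` (L -` A \<inter> space \<sigma>) \<inter> space \<sigma>"
    using L(2) T'(3) orthogonal_transformation_sphere_Int[OF T'(1,2)] space by auto
  then have "emeasure ?\<nu> (T -` A \<inter> space ?\<nu>) = emeasure \<sigma> (T' -` (L -` A \<inter> space \<sigma>) \<inter> space \<sigma>)"
    using emeasure_distr[OF Lm TA] by (simp add: space_restrict_space)
  also have "\<dots> = emeasure \<sigma> (L -` A \<inter> space \<sigma>)" by (rule inv[OF T'(1,2) LA])
  also have "\<dots> = emeasure ?\<nu> A" by (rule emeasure_distr[OF Lm A, symmetric])
  finally show "emeasure ?\<nu> (T -` A \<inter> space ?\<nu>) = emeasure ?\<nu> A" .
qed

lemma emeasure_lborel_orthogonal_vimage: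
  fixes T :: "real^'m::{finite,wellorder} \<Rightarrow> real^'m::_"
  assumes T: "orthogonal_transformation T" and Y: "Y \<in> sets borel" "bounded Y"
  shows "emeasure lborel (T -` Y) = emeasure lborel Y"
proof -
  have TY: "T -` Y \<in> sets borel"
    using measurable_orthogonal_transformation[OF T] Y(1) by (simp add: measurable_sets_borel)
  have iT: "orthogonal_transformation (inv T)" by (rule orthogonal_transformation_inv[OF T])
  have pre: "T -` Y = inv T ` Y"
    using orthogonal_transformation_bij[OF T] by (simp add: bij_vimage_eq_inv_image)
  obtain r where "Y \<subseteq> ball 0 r" using Y(2) bounded_subset_ballD by blast
  then have Yl: "Y \<in> lmeasurable"
    using Y(1) by (intro fmeasurableI2[OF lmeasurable_ball]) (auto intro: sets_completionI_sets)
  have "emeasure lebesgue (inv T ` Y) = emeasure lebesgue Y"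
    using measure_orthogonal_image[OF iT Yl] measurable_orthogonal_image[OF iT Yl] Yl
    by (simp add: emeasure_eq_measure2)
  moreover have "emeasure lebesgue S = emeasure lborel S" if "S \<in> sets borel" for S
    using emeasure_completion[of S lborel] main_part_sets[of S lborel] that by simp
  ultimately show ?thesis using TY Y(1) pre by simp
qed

lemma is_haar_sphere_distr_uniform:
  fixes B :: "(real^'m::{finite,wellorder}) set"
  assumes E: "subspace E" and B: "B \<in> sets borel" "bounded B" "emeasure lborel B \<noteq> 0"
    and g: "g \<in> borel_measurable borel" "\<And>x. g x \<in> sphere 0 1 \<inter> E"
    and equivariant: "\<And>T x. orthogonal_transformation T \<Longrightarrow> T ` E = E \<Longrightarrow>
        (T x \<in> B \<longleftrightarrow> x \<in> B) \<and> (x \<in> B \<longrightarrow> g (T x) = T (g x))"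
  shows "is_haar_sphere E (distr (uniform_measure lborel B) (restrict_space borel (sphere 0 1 \<inter> E)) g)"
  unfolding is_haar_sphere_def
proof (intro conjI allI impI ballI)
  let ?S = "sphere 0 1 \<inter> E" and ?U = "uniform_measure lborel B"
  let ?\<sigma> = "distr ?U (restrict_space borel ?S) g"
  obtain r where "B \<subseteq> ball 0 r" using B(2) bounded_subset_ballD by blast
  then have "emeasure lborel B \<le> emeasure lborel (ball (0::real^'m::_) r)"
    using B(1) by (intro emeasure_mono) auto
  then have "emeasure lborel B \<noteq> \<infinity>"
    using emeasure_lborel_ball_finite[of "0::real^'m::_" r] by (auto simp: top_unique)
  then have U: "prob_space ?U" by (intro prob_space_uniform_measure B(3))
  have gm: "g \<in> measurable ?U (restrict_space borel ?S)"
    using g measurable_cong_sets[of ?U borel] by (intro measurable_restrict_space2) auto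
  have emeasure: "emeasure ?\<sigma> X = emeasure lborel (B \<inter> g -` X) / emeasure lborel B"
    if "X \<in> sets (restrict_space borel ?S)" for X
    using emeasure_distr[OF gm that] measurable_sets[OF gm that] B(1)
    by (simp add: emeasure_uniform_measure)
  show "sets ?\<sigma> = sets (restrict_space borel ?S)" by simp
  show "prob_space ?\<sigma>" by (rule prob_space.prob_space_distr[OF U gm])
  fix T A assume "orthogonal_transformation T \<and> T ` E = E" and A: "A \<in> sets ?\<sigma>"
  then have T: "orthogonal_transformation T" "T ` E = E" by auto
  have A: "A \<in> sets (restrict_space borel ?S)" using A by simp
  have TA: "T -` A \<inter> ?S \<in> sets (restrict_space borel ?S)"
    using measurable_sets[OF measurable_restrict_sphere_Int[OF orthogonal_transformation_linear[OF T(1)]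
          orthogonal_transformation_sphere_Int[OF T]] A]
    by (simp add: space_restrict_space)
  have "B \<inter> g -` A \<in> sets borel"
    using measurable_sets[OF gm A] B(1) by (simp add: Int_absorb1)
  moreover have "bounded (B \<inter> g -` A)" using B(2) bounded_subset by blast
  ultimately have "emeasure lborel (T -` (B \<inter> g -` A)) = emeasure lborel (B \<inter> g -` A)"
    by (rule emeasure_lborel_orthogonal_vimage[OF T(1)])
  moreover have "B \<inter> g -` (T -` A \<inter> ?S) = T -` (B \<inter> g -` A)"
    using equivariant[OF T] g(2) by auto
  ultimately have "emeasure lborel (B \<inter> g -` (T -` A \<inter> ?S)) = emeasure lborel (B \<inter> g -` A)"
    by simp
  then show "emeasure ?\<sigma> (T -` A \<inter> space ?\<sigma>) = emeasure ?\<sigma> A"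
    using emeasure[OF TA] emeasure[OF A] by (simp add: space_restrict_space)
qed

lemma ball_subset_orthogonal_projection_nonzero:
  fixes E :: "'a::euclidean_space set"
  assumes E: "subspace E" and u: "u \<in> E" "norm u = 1"
  shows "ball (u /\<^sub>R 2) (1/4) \<subseteq> ball 0 1 \<inter> {x. orthogonal_projection E x \<noteq> 0}"
proof
  let ?P = "orthogonal_projection E"
  fix z assume z: "z \<in> ball (u /\<^sub>R 2) (1/4)"
  have "norm z \<le> norm (u /\<^sub>R 2) + norm (z - u /\<^sub>R 2)" by (rule norm_triangle_sub)
  also have "\<dots> < 1" using z u by (simp add: dist_norm norm_minus_commute)
  finally have "z \<in> ball 0 1" by simp
  moreover have "?P (z - u /\<^sub>R 2) = ?P z - u /\<^sub>R 2"
    using linear_diff[OF linear_orthogonal_projection[OF E]] orthogonal_projection_id[OF E] u E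
    by (simp add: subspace_scale)
  then have "norm (?P z - u /\<^sub>R 2) < 1/4"
    using norm_orthogonal_projection_le[OF E, of "z - u /\<^sub>R 2"] z
    by (simp add: dist_norm norm_minus_commute)
  then have "?P z \<noteq> 0" using u by auto
  ultimately show "z \<in> ball 0 1 \<inter> {x. ?P x \<noteq> 0}" by simp
qed

lemma is_haar_sphere_exists_wellorder:
  fixes E :: "(real^'m::{finite,wellorder}) set"
  assumes E: "subspace E" and u: "u \<in> E" "norm u = 1"
  shows "\<exists>\<sigma>. is_haar_sphere E \<sigma>"
proof -
  let ?P = "orthogonal_projection E"
  define B where "B = ball 0 1 \<inter> {x. ?P x \<noteq> 0}"
  define g where "g x = (if ?P x = 0 then u else ?P x /\<^sub>R norm (?P x))" for x
  have cont: "continuous_on UNIV ?P"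
    using linear_orthogonal_projection[OF E] by (simp add: linear_continuous_on linear_conv_bounded_linear)
  have "open B"
    unfolding B_def by (intro open_Int open_ball open_Collect_neq cont continuous_on_const)
  have "ball (u /\<^sub>R 2) (1/4) \<subseteq> B"
    unfolding B_def by (rule ball_subset_orthogonal_projection_nonzero[OF E u])
  then have "emeasure lborel (ball (u /\<^sub>R 2) (1/4)) \<le> emeasure lborel B"
    using \<open>open B\<close> by (intro emeasure_mono) auto
  moreover have "emeasure lborel (ball (u /\<^sub>R 2) (1/4::real)) > 0"
    by (simp add: emeasure_ball unit_ball_vol_pos)
  ultimately have B_pos: "emeasure lborel B \<noteq> 0" by auto
  have B_bounded: "bounded B" by (rule bounded_subset[of "ball 0 1"]) (auto simp: B_def)
  have g_meas: "g \<in> borel_measurable borel"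
    using borel_measurable_continuous_onI[OF cont] unfolding g_def by measurable
  have g_sphere: "g x \<in> sphere 0 1 \<inter> E" for x
    using u orthogonal_projection_in[OF E, of x] E by (auto simp: g_def subspace_scale)
  have equivariant: "(T x \<in> B \<longleftrightarrow> x \<in> B) \<and> (x \<in> B \<longrightarrow> g (T x) = T (g x))"
    if T: "orthogonal_transformation T" "T ` E = E" for T x
  proof -
    have "?P (T x) = T (?P x)" by (rule orthogonal_projection_orthogonal_transformation[OF E T])
    moreover have "norm (T v) = norm v" for v using T(1) orthogonal_transformation_norm by blast
    moreover have "T v = 0 \<longleftrightarrow> v = 0" for v
      using orthogonal_transformation_norm[OF T(1), of v] by (metis norm_eq_zero)
    ultimately show ?thesis
      by (simp add: B_def g_def linear_scale[OF orthogonal_transformation_linear[OF T(1)]])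
  qed
  from \<open>open B\<close> have "B \<in> sets borel" by simp
  from is_haar_sphere_distr_uniform[OF E this B_bounded B_pos g_meas g_sphere equivariant]
  show ?thesis by blast
qed

lemma inner_linear_isometry:
  assumes J: "linear J" "\<And>x. norm (J x) = norm x"
  shows "J x \<bullet> J y = x \<bullet> y"
proof -
  have "(J x + J y) \<bullet> (J x + J y) = (x + y) \<bullet> (x + y)"
    using J(2)[of "x + y"] linear_add[OF J(1)] by (simp add: power2_norm_eq_inner[symmetric])
  moreover have "J x \<bullet> J x = x \<bullet> x" "J y \<bullet> J y = y \<bullet> y"
    using J(2) by (simp_all add: power2_norm_eq_inner[symmetric])
  ultimately show ?thesis by (simp add: inner_add_left inner_add_right inner_commute)
qed

lemma adjoint_linear_isometry_cancel:
  fixes J :: "'a::euclidean_space \<Rightarrow> 'b::euclidean_space"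
  assumes J: "linear J" "\<And>x. norm (J x) = norm x"
  shows "adjoint J (J x) = x"
proof -
  have "x \<bullet> adjoint J y = J x \<bullet> y" for x y by (rule adjoint_works[OF J(1)])
  then have "(adjoint J (J x) - x) \<bullet> (adjoint J (J x) - x) = 0"
    by (simp add: inner_diff_left inner_diff_right inner_linear_isometry[OF J] inner_commute)
  then show ?thesis by simp
qed

lemma orthogonal_transformation_extend_isometry:
  fixes J :: "'a::euclidean_space \<Rightarrow> 'b::euclidean_space"
  assumes J: "linear J" "\<And>x. norm (J x) = norm x" and T: "orthogonal_transformation T"
  obtains T' where "orthogonal_transformation T'" "\<And>x. T' (J x) = J (T x)"
proof
  let ?K = "adjoint J"
  define T' where "T' y = J (T (?K y)) + (y - J (?K y))" for y
  have lK: "linear ?K" by (rule adjoint_linear[OF J(1)])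
  have "linear T'"
    unfolding T'_def using lK orthogonal_transformation_linear[OF T] J(1)
    by (intro linear_compose_add linear_compose_sub linear_ident
        linear_compose[of ?K "\<lambda>x. J (T x)", unfolded o_def] linear_compose[of ?K J, unfolded o_def]
        linear_compose[of T J, unfolded o_def])
  moreover have "norm (T' y) = norm y" for y
  proof -
    have orth: "orthogonal (J z) (y - J (?K y))" for z
      using adjoint_works[OF J(1), of z y] inner_linear_isometry[OF J, of z "?K y"]
      by (simp add: orthogonal_def inner_diff_right)
    have "(norm (T' y))\<^sup>2 = (norm (J (T (?K y))))\<^sup>2 + (norm (y - J (?K y)))\<^sup>2"
      unfolding T'_def by (rule norm_add_Pythagorean[OF orth])
    also have "\<dots> = (norm (J (?K y)))\<^sup>2 + (norm (y - J (?K y)))\<^sup>2"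
      using J(2) T by (simp add: orthogonal_transformation_norm)
    also have "\<dots> = (norm y)\<^sup>2"
      using norm_add_Pythagorean[OF orth, of "?K y"] by simp
    finally show ?thesis by simp
  qed
  ultimately show "orthogonal_transformation T'" by (simp add: orthogonal_transformation)
  show "T' (J x) = J (T x)" for x by (simp add: T'_def adjoint_linear_isometry_cancel[OF J])
qed

text \<open>The library proves invariance of Lebesgue measure under orthogonal maps only for index types
  with a well-order, so \<open>E\<close> is first embedded isometrically into \<open>real^('n bit0)\<close>.\<close>

lemma is_haar_sphere_exists:
  fixes E :: "(real^'n) set"
  assumes E: "subspace E" "0 < dim E"
  shows "\<exists>\<sigma>. is_haar_sphere E \<sigma>"
proof -
  obtain W :: "(real^('n bit0)) set" where W: "subspace W" "dim W = CARD('n)"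
    using choose_subspace_of_subspace[of "CARD('n)" "UNIV :: (real^('n bit0)) set"] by auto
  then have "dim (UNIV :: (real^'n) set) = dim W" by simp
  then obtain J :: "real^'n \<Rightarrow> real^('n bit0)"
    where "linear J" "\<And>x. x \<in> UNIV \<Longrightarrow> norm (J x) = norm x"
    using isometry_subspaces[OF subspace_UNIV W(1)] by metis
  then have J: "linear J" "\<And>x. norm (J x) = norm x" by simp_all
  have "\<not> E \<subseteq> {0}" using E(2) by (metis dim_eq_0 less_nat_zero_code)
  then obtain e where e: "e \<in> E" "e \<noteq> 0" by blast
  have "subspace (J ` E)" by (rule linear_subspace_image[OF J(1) E(1)])
  moreover have "J (e /\<^sub>R norm e) \<in> J ` E" "norm (J (e /\<^sub>R norm e)) = 1"
    using e E(1) J(2) by (auto simp: subspace_scale)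
  ultimately obtain \<sigma>' where \<sigma>': "is_haar_sphere (J ` E) \<sigma>'"
    using is_haar_sphere_exists_wellorder by blast
  have "is_haar_sphere E (distr \<sigma>' (restrict_space borel (sphere 0 1 \<inter> E)) (adjoint J))"
  proof (rule is_haar_sphere_distr[OF \<sigma>' adjoint_linear[OF J(1)]])
    show "adjoint J y \<in> sphere 0 1 \<inter> E" if "y \<in> sphere 0 1 \<inter> J ` E" for y
      using that J(2) by (auto simp: adjoint_linear_isometry_cancel[OF J])
    fix T assume T: "orthogonal_transformation T" "T ` E = E"
    obtain T' where T': "orthogonal_transformation T'" "\<And>x. T' (J x) = J (T x)"
      using orthogonal_transformation_extend_isometry[OF J T(1)] by blast
    have "T' ` J ` E = J ` T ` E" by (simp add: image_image T'(2))
    then show "\<exists>T'. orthogonal_transformation T' \<and> T' ` J ` E = J ` E \<and>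
        (\<forall>y\<in>J ` E. adjoint J (T' y) = T (adjoint J y))"
      using T' T(2) by (auto simp: adjoint_linear_isometry_cancel[OF J])
  qed
  then show ?thesis by blast
qed

lemma haar_sphere_is_haar_sphere:
  fixes E :: "(real^'n) set"
  assumes E: "subspace E" "0 < dim E"
  shows "is_haar_sphere E (haar_sphere E)"
proof -
  obtain \<sigma> where "is_haar_sphere E \<sigma>" using is_haar_sphere_exists[OF E] by blast
  then have "\<exists>!\<sigma>. is_haar_sphere E \<sigma>" using is_haar_sphere_unique[OF E(1)] by blast
  then show ?thesis unfolding haar_sphere_eq_The by (rule theI')
qed

section \<open>The spherical Radon transform\<close>

context
  fixes E :: "(real^'n) set"
  assumes E: "subspace E" "0 < dim E"
begin

lemma prob_space_haar_sphere: "prob_space (haar_sphere E)"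
  using haar_sphere_is_haar_sphere[OF E] by (simp add: is_haar_sphere_def)

lemma space_haar_sphere: "space (haar_sphere E) = sphere 0 1 \<inter> E"
  by (rule space_is_haar_sphere[OF haar_sphere_is_haar_sphere[OF E]])

lemma borel_measurable_haar_sphere:
  assumes "continuous_on (sphere 0 1) h"
  shows "h \<in> borel_measurable (haar_sphere E)"
proof -
  have "sets (haar_sphere E) = sets (restrict_space borel (sphere 0 1 \<inter> E))"
    using haar_sphere_is_haar_sphere[OF E] by (simp add: is_haar_sphere_def)
  then show ?thesis
    using borel_measurable_continuous_on_restrict[OF continuous_on_subset[OF assms]]
      measurable_cong_sets by blast
qed

lemma integrable_haar_sphere:
  assumes h: "continuous_on (sphere 0 1) h"
  shows "integrable (haar_sphere E) (h :: real^'n \<Rightarrow> real)"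
proof -
  interpret prob_space "haar_sphere E" by (rule prob_space_haar_sphere)
  obtain B where "\<forall>x \<in> sphere 0 1. norm (h x) \<le> B"
    using compact_imp_bounded[OF compact_continuous_image[OF h compact_sphere]]
    by (auto simp: bounded_iff)
  then show ?thesis
    using space_haar_sphere borel_measurable_haar_sphere[OF h]
    by (intro integrable_const_bound[where B=B]) (auto intro: AE_I2)
qed

lemma radon_diff_le:
  assumes f: "continuous_on (sphere 0 1) f" and g: "continuous_on (sphere 0 1) g"
    and fg: "\<And>x. x \<in> sphere 0 1 \<Longrightarrow> \<bar>f x - g x\<bar> \<le> e"
  shows "\<bar>radon f E - radon g E\<bar> \<le> e"
proof -
  interpret prob_space "haar_sphere E" by (rule prob_space_haar_sphere)
  have "radon f E - radon g E = (\<integral>x. f x - g x \<partial>haar_sphere E)"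
    unfolding radon_def using integrable_haar_sphere[OF f] integrable_haar_sphere[OF g] by simp
  also have "\<bar>\<dots>\<bar> \<le> (\<integral>x. \<bar>f x - g x\<bar> \<partial>haar_sphere E)" by (rule integral_abs_bound)
  also have "\<dots> \<le> (\<integral>x. e \<partial>haar_sphere E)"
    using integrable_haar_sphere[OF f] integrable_haar_sphere[OF g] fg space_haar_sphere
    by (intro integral_mono) auto
  finally show ?thesis by (simp add: prob_space)
qed

lemma radon_sum:
  assumes "\<And>i. i \<in> I \<Longrightarrow> continuous_on (sphere 0 1) (g i)"
  shows "radon (\<lambda>x. \<Sum>i\<in>I. c i * g i x) E = (\<Sum>i\<in>I. c i * radon (g i) E)"
  unfolding radon_def using integrable_haar_sphere[OF assms] by (simp add: integral_sum)

lemma radon_ridge_orthogonal_projection: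
  "radon (\<lambda>x. \<phi> (a \<bullet> x)) E = radon (\<lambda>x. \<phi> (orthogonal_projection E a \<bullet> x)) E"
  unfolding radon_def
proof (intro Bochner_Integration.integral_cong refl)
  fix x assume "x \<in> space (haar_sphere E)"
  then have "x \<in> E" by (simp add: space_haar_sphere)
  then show "\<phi> (a \<bullet> x) = \<phi> (orthogonal_projection E a \<bullet> x)"
    using inner_orthogonal_projection[OF E(1), of x a] by simp
qed

lemma radon_orthogonal_image:
  fixes T :: "real^'n \<Rightarrow> real^'n"
  assumes T: "orthogonal_transformation T" and h: "continuous_on (sphere 0 1) h"
  shows "radon h (T ` E) = radon (\<lambda>x. h (T x)) E"
proof -
  let ?E' = "T ` E" and ?\<mu> = "haar_sphere E"
  have lin: "linear T" by (rule orthogonal_transformation_linear[OF T])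
  have bij: "bij T" by (rule orthogonal_transformation_bij[OF T])
  have "dim ?E' = dim E"
    using dim_image_eq[OF lin inj_on_subset[OF bij_is_inj[OF bij] subset_UNIV]] .
  then have E': "subspace ?E'" "0 < dim ?E'"
    using E linear_subspace_image[OF lin E(1)] by simp_all
  have TS: "T x \<in> sphere 0 1 \<inter> ?E'" if "x \<in> sphere 0 1 \<inter> E" for x
    using that T by (auto simp: orthogonal_transformation_norm)
  let ?\<nu> = "distr ?\<mu> (restrict_space borel (sphere 0 1 \<inter> ?E')) T"
  have "is_haar_sphere ?E' ?\<nu>"
  proof (rule is_haar_sphere_distr[OF haar_sphere_is_haar_sphere[OF E] lin TS])
    fix T1 assume T1: "orthogonal_transformation T1" "T1 ` ?E' = ?E'"
    define T' where "T' = inv T \<circ> T1 \<circ> T"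
    have "orthogonal_transformation T'"
      unfolding T'_def using T T1(1) orthogonal_transformation_inv[OF T]
      by (intro orthogonal_transformation_compose)
    moreover have "T' ` E = inv T ` (T1 ` (T ` E))" by (simp add: T'_def image_comp)
    then have "T' ` E = E" using T1(2) bij by (simp add: bij_is_inj image_inv_f_f)
    moreover have "T (T' y) = T1 (T y)" for y
      using bij by (simp add: T'_def bij_is_surj surj_f_inv_f)
    ultimately show "\<exists>T'. orthogonal_transformation T' \<and> T' ` E = E \<and> (\<forall>y\<in>E. T (T' y) = T1 (T y))"
      by (intro exI[of _ T'] conjI ballI)
  qed
  then have haar: "haar_sphere ?E' = ?\<nu>"
    using is_haar_sphere_unique[OF E'(1) haar_sphere_is_haar_sphere[OF E']] by blast
  have sets: "sets ?\<mu> = sets (restrict_space borel (sphere 0 1 \<inter> E))"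
    using haar_sphere_is_haar_sphere[OF E] by (simp add: is_haar_sphere_def)
  have Tm: "T \<in> measurable ?\<mu> (restrict_space borel (sphere 0 1 \<inter> ?E'))"
    unfolding measurable_cong_sets[OF sets refl] by (rule measurable_restrict_sphere_Int[OF lin TS])
  have hm: "h \<in> borel_measurable (restrict_space borel (sphere 0 1 \<inter> ?E'))"
    by (rule borel_measurable_continuous_on_restrict[OF continuous_on_subset[OF h]]) simp
  show ?thesis unfolding radon_def haar by (rule integral_distr[OF Tm hm])
qed

end

lemma radon_scale:
  "radon (\<lambda>x. c * g x) E = c * radon g E"
  by (simp add: radon_def)

lemma radon_ridge_eq:
  fixes E E' :: "(real^'n) set"
  assumes E: "subspace E" "0 < dim E" and E': "subspace E'" "dim E' = dim E"
    and ab: "norm (orthogonal_projection E a) = norm (orthogonal_projection E' b)"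
    and \<phi>: "continuous_on UNIV \<phi>"
  shows "radon (\<lambda>x. \<phi> (a \<bullet> x)) E = radon (\<lambda>x. \<phi> (b \<bullet> x)) E'"
proof -
  let ?a = "orthogonal_projection E a" and ?b = "orthogonal_projection E' b"
  obtain T where T: "orthogonal_transformation T" "T ` E = E'" "T ?a = ?b"
    using orthogonal_transformation_onto_subspace_point[OF E(1) E'(1) E'(2)[symmetric]
        orthogonal_projection_in[OF E(1)] orthogonal_projection_in[OF E'(1)] ab] .
  have cont: "continuous_on (sphere 0 1) (\<lambda>x. \<phi> (c \<bullet> x))" for c
    by (intro continuous_on_compose2[OF \<phi>] continuous_intros) auto
  have "radon (\<lambda>x. \<phi> (a \<bullet> x)) E = radon (\<lambda>x. \<phi> (?a \<bullet> x)) E"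
    by (rule radon_ridge_orthogonal_projection[OF E])
  also have "\<dots> = radon (\<lambda>x. \<phi> (?b \<bullet> T x)) E"
    using T(1,3) by (simp add: orthogonal_transformation_def flip: T(3))
  also have "\<dots> = radon (\<lambda>x. \<phi> (?b \<bullet> x)) E'"
    using radon_orthogonal_image[OF E T(1) cont] T(2) by simp
  also have "\<dots> = radon (\<lambda>x. \<phi> (b \<bullet> x)) E'"
    using E' E by (intro radon_ridge_orthogonal_projection[symmetric]) simp_all
  finally show ?thesis .
qed

lemma radon_ridge_eq_unit_vector:
  fixes E F :: "(real^'n) set"
  assumes E: "subspace E" "0 < dim E" and F: "subspace F" "dim F = dim E" "u \<in> F" "norm u = 1"
    and \<phi>: "continuous_on UNIV \<phi>"
  shows "radon (\<lambda>x. \<phi> (a \<bullet> x)) E = radon (\<lambda>x. \<phi> (norm (orthogonal_projection E a) * (u \<bullet> x))) F"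
proof -
  let ?v = "norm (orthogonal_projection E a) *\<^sub>R u"
  have "orthogonal_projection F ?v = ?v"
    using F by (intro orthogonal_projection_id) (simp_all add: subspace_scale)
  then have "norm (orthogonal_projection E a) = norm (orthogonal_projection F ?v)"
    using F(4) by simp
  from radon_ridge_eq[OF E F(1,2) this \<phi>] show ?thesis by simp
qed

lemma radon_even_power_ridge:
  fixes E F :: "(real^'n) set"
  assumes E: "subspace E" "0 < dim E" and F: "subspace F" "dim F = dim E" "u \<in> F" "norm u = 1"
  shows "radon (\<lambda>x. (a \<bullet> x) ^ (2 * j)) E
    = ((norm (orthogonal_projection E a))\<^sup>2) ^ j * radon (\<lambda>x. (u \<bullet> x) ^ (2 * j)) F"
proof -
  have "radon (\<lambda>x. (a \<bullet> x) ^ (2 * j)) E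
      = radon (\<lambda>x. (norm (orthogonal_projection E a) * (u \<bullet> x)) ^ (2 * j)) F"
    using E F by (intro radon_ridge_eq_unit_vector) (auto intro: continuous_intros)
  then show ?thesis by (simp add: power_mult_distrib power_mult radon_scale)
qed

lemma radon_even_power_pos:
  fixes F :: "(real^'n) set"
  assumes F: "subspace F" "0 < dim F" and u: "u \<in> F" "norm u = 1"
  shows "0 < radon (\<lambda>x. (u \<bullet> x) ^ (2 * j)) F"
proof (rule ccontr)
  let ?\<mu> = "haar_sphere F"
  interpret prob_space ?\<mu> by (rule prob_space_haar_sphere[OF F])
  assume "\<not> 0 < radon (\<lambda>x. (u \<bullet> x) ^ (2 * j)) F"
  moreover have "0 \<le> radon (\<lambda>x. (u \<bullet> x) ^ (2 * j)) F"
    unfolding radon_def by (rule Bochner_Integration.integral_nonneg) (simp add: zero_le_even_power)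
  ultimately have C: "radon (\<lambda>x. (u \<bullet> x) ^ (2 * j)) F = 0" by simp
  have null: "AE x in ?\<mu>. b \<bullet> x = 0" if b: "b \<in> F" for b
  proof -
    have "(\<integral>x. (b \<bullet> x) ^ (2 * j) \<partial>?\<mu>) = 0"
      using radon_even_power_ridge[OF F F(1) refl u, of b j] C by (simp add: radon_def)
    then have "AE x in ?\<mu>. (b \<bullet> x) ^ (2 * j) = 0"
      using integral_nonneg_eq_0_iff_AE[OF integrable_haar_sphere[OF F]]
      by (simp add: zero_le_even_power continuous_intros)
    then show ?thesis by (rule AE_mp) (auto intro!: AE_I2)
  qed
  obtain B where B: "B \<subseteq> F" "independent B" "span B = F"
    using orthonormal_basis_subspace[OF F(1)] by metis
  have "AE x in ?\<mu>. \<forall>b\<in>B. b \<bullet> x = 0"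
    using independent_imp_finite[OF B(2)] B(1) null by (intro AE_finite_allI) auto
  moreover have "AE x in ?\<mu>. x \<in> sphere 0 1 \<inter> F"
    using space_haar_sphere[OF F] by (intro AE_I2) auto
  ultimately have "AE x in ?\<mu>. False"
  proof eventually_elim
    case (elim x)
    then have "orthogonal x x"
      using B(3) by (intro orthogonal_to_span[of x B x]) (auto simp: orthogonal_def inner_commute)
    then show False using elim(2) by (simp add: orthogonal_def)
  qed
  then show False by simp
qed

lemma continuous_on_integral_exp_mult:
  fixes g :: "'a \<Rightarrow> real"
  assumes M: "prob_space M" and g: "g \<in> borel_measurable M"
    and g_bound: "\<And>x. x \<in> space M \<Longrightarrow> \<bar>g x\<bar> \<le> 1"
  shows "continuous_on UNIV (\<lambda>r. \<integral>x. exp (r * g x) \<partial>M)"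
proof (rule continuous_at_imp_continuous_on, intro ballI continuous_at_sequentiallyI)
  interpret prob_space M by fact
  fix r :: real and s :: "nat \<Rightarrow> real" assume s: "s \<longlonglongrightarrow> r"
  obtain B where B: "\<And>n. norm (s n) \<le> B"
    using BseqE[OF convergent_imp_Bseq[OF convergentI[OF s]]] by blast
  have "0 \<le> B" by (rule order_trans[OF norm_ge_zero B])
  show "(\<lambda>n. \<integral>x. exp (s n * g x) \<partial>M) \<longlonglongrightarrow> (\<integral>x. exp (r * g x) \<partial>M)"
  proof (rule integral_dominated_convergence[where w="\<lambda>_. exp B"])
    show "(\<lambda>x. exp (r * g x)) \<in> borel_measurable M" using g by measurable
    show "(\<lambda>x. exp (s n * g x)) \<in> borel_measurable M" for n using g by measurable
    show "AE x in M. (\<lambda>n. exp (s n * g x)) \<longlonglongrightarrow> exp (r * g x)"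
      by (intro AE_I2 tendsto_intros s)
    show "AE x in M. norm (exp (s n * g x)) \<le> exp B" for n
    proof (intro AE_I2)
      fix x assume x: "x \<in> space M"
      have "s n * g x \<le> \<bar>s n\<bar> * \<bar>g x\<bar>" by (simp add: abs_mult[symmetric])
      also have "\<dots> \<le> B * 1" using B g_bound[OF x] \<open>0 \<le> B\<close> by (intro mult_mono) auto
      finally show "norm (exp (s n * g x)) \<le> exp B" by simp
    qed
  qed simp
qed

lemma continuous_on_radon_exp_mult:
  fixes F :: "(real^'n) set"
  assumes F: "subspace F" "0 < dim F" and u: "norm u = 1"
  shows "continuous_on UNIV (\<lambda>r. radon (\<lambda>x. exp (r * (u \<bullet> x))) F)"
  unfolding radon_def
proof (intro continuous_on_integral_exp_mult prob_space_haar_sphere[OF F]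
    borel_measurable_haar_sphere[OF F] continuous_intros)
  fix x assume "x \<in> space (haar_sphere F)"
  then show "\<bar>u \<bullet> x\<bar> \<le> 1"
    using Cauchy_Schwarz_ineq2[of u x] u by (simp add: space_haar_sphere[OF F])
qed

lemma radon_exp_orthogonal_comp:
  fixes E F :: "(real^'n) set"
  assumes E: "subspace E" "dim E < CARD('n)"
    and F: "subspace F" "dim F = CARD('n) - dim E" "u \<in> F" "norm u = 1"
  shows "radon (\<lambda>x. exp (a \<bullet> x)) (orthogonal_comp E)
    = radon (\<lambda>x. exp (sqrt ((norm a)\<^sup>2 - (norm (orthogonal_projection E a))\<^sup>2) * (u \<bullet> x))) F"
proof -
  have "dim (orthogonal_comp E) = CARD('n) - dim E"
    using dim_orthogonal_comp[OF E(1)] by simp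
  then have "radon (\<lambda>x. exp (a \<bullet> x)) (orthogonal_comp E)
      = radon (\<lambda>x. exp (norm (orthogonal_projection (orthogonal_comp E) a) * (u \<bullet> x))) F"
    using E F subspace_orthogonal_comp continuous_on_exp[OF continuous_on_id]
    by (intro radon_ridge_eq_unit_vector) auto
  also have "norm (orthogonal_projection (orthogonal_comp E) a)
      = sqrt ((norm a)\<^sup>2 - (norm (orthogonal_projection E a))\<^sup>2)"
    using norm_orthogonal_projection_Pythagorean[OF E(1), of a]
    by (simp add: orthogonal_projection_orthogonal_comp[OF E(1)])
  finally show ?thesis .
qed

lemma abs_sum_mult_diff_le:
  fixes c x y :: "'a \<Rightarrow> real"
  assumes "\<And>i. i \<in> I \<Longrightarrow> \<bar>x i - y i\<bar> \<le> \<eta>"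
  shows "\<bar>(\<Sum>i\<in>I. c i * x i) - (\<Sum>i\<in>I. c i * y i)\<bar> \<le> (\<Sum>i\<in>I. \<bar>c i\<bar>) * \<eta>"
proof -
  have "\<bar>(\<Sum>i\<in>I. c i * x i) - (\<Sum>i\<in>I. c i * y i)\<bar> = \<bar>\<Sum>i\<in>I. c i * (x i - y i)\<bar>"
    by (simp add: sum_subtractf right_diff_distrib)
  also have "\<dots> \<le> (\<Sum>i\<in>I. \<bar>c i\<bar> * \<eta>)"
    using assms by (intro order_trans[OF sum_abs] sum_mono) (simp add: abs_mult mult_left_mono)
  finally show ?thesis by (simp add: sum_distrib_right)
qed

lemma radon_sum_diff_le:
  fixes E F :: "(real^'n) set"
  assumes E: "subspace E" "0 < dim E" and F: "subspace F" "0 < dim F"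
    and g: "\<And>i. i \<in> I \<Longrightarrow> continuous_on (sphere 0 1) (g i)"
    and h: "\<And>i. i \<in> I \<Longrightarrow> continuous_on (sphere 0 1) (h i)"
    and close: "\<And>i. i \<in> I \<Longrightarrow> \<bar>radon (g i) F - radon (h i) E\<bar> \<le> \<eta>"
  shows "\<bar>radon (\<lambda>x. \<Sum>i\<in>I. c i * g i x) F - radon (\<lambda>x. \<Sum>i\<in>I. c i * h i x) E\<bar> \<le> (\<Sum>i\<in>I. \<bar>c i\<bar>) * \<eta>"
proof -
  have "radon (\<lambda>x. \<Sum>i\<in>I. c i * g i x) F = (\<Sum>i\<in>I. c i * radon (g i) F)"
    by (rule radon_sum[OF F]) (rule g)
  moreover have "radon (\<lambda>x. \<Sum>i\<in>I. c i * h i x) E = (\<Sum>i\<in>I. c i * radon (h i) E)"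
    by (rule radon_sum[OF E]) (rule h)
  ultimately show ?thesis using abs_sum_mult_diff_le[OF close] by simp
qed

section \<open>Approximating \<open>I \<circ> R_k\<close> by \<open>R_(n-k)\<close>\<close>

definition exp_sum :: "(real \<times> 'a::real_inner) list \<Rightarrow> 'a \<Rightarrow> real" where
  "exp_sum L x = (\<Sum>(c, a)\<leftarrow>L. c * exp (a \<bullet> x))"

lemma exp_sum_Cons: "exp_sum ((c, a) # L) x = c * exp (a \<bullet> x) + exp_sum L x"
  by (simp add: exp_sum_def)

lemma continuous_on_exp_sum: "continuous_on S (exp_sum L)"
proof (induction L)
  case (Cons p L)
  then show ?case by (cases p) (simp add: exp_sum_Cons[abs_def] continuous_intros)
qed (simp add: exp_sum_def)

lemma exp_sum_append: "exp_sum (L1 @ L2) x = exp_sum L1 x + exp_sum L2 x"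
  by (simp add: exp_sum_def)

lemma exp_sum_mult:
  "exp_sum [(c * d, a + b). (c, a) \<leftarrow> L1, (d, b) \<leftarrow> L2] x = exp_sum L1 x * exp_sum L2 x"
proof (induction L1)
  case (Cons p L1)
  obtain c a where p: "p = (c, a)" by fastforce
  have "exp_sum (map (\<lambda>(d, b). (c * d, a + b)) L2) x = c * exp (a \<bullet> x) * exp_sum L2 x"
    by (induction L2) (auto simp: exp_sum_def algebra_simps inner_add_left exp_add)
  then show ?case
    using Cons by (simp add: p exp_sum_def ring_distribs)
qed (simp add: exp_sum_def)

lemma exp_sum_dense:
  fixes f :: "'a::euclidean_space \<Rightarrow> real"
  assumes f: "continuous_on (sphere 0 1) f" and e: "0 < e"
  obtains N :: nat and c a where "\<And>x. x \<in> sphere 0 1 \<Longrightarrow> \<bar>f x - (\<Sum>i<N. c i * exp (a i \<bullet> x))\<bar> < e"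
proof -
  have "\<exists>g. (\<exists>L. g = exp_sum L) \<and> (\<forall>x\<in>sphere 0 1. \<bar>f x - g x\<bar> < e)"
  proof (rule Stone_Weierstrass_HOL[OF compact_sphere _ _ _ _ _ f e])
    show "\<exists>L. (\<lambda>x. k) = exp_sum L" for k
      by (intro exI[of _ "[(k, 0)]"]) (simp add: exp_sum_def fun_eq_iff)
    show "continuous_on (sphere 0 1) g" if "\<exists>L. g = exp_sum L" for g
      using that continuous_on_exp_sum by blast
    show "\<exists>L. (\<lambda>x. g x + h x) = exp_sum L" if gh: "(\<exists>L. g = exp_sum L) \<and> (\<exists>L. h = exp_sum L)" for g h
    proof -
      obtain L1 L2 where "g = exp_sum L1" "h = exp_sum L2" using gh by blast
      then show ?thesis by (intro exI[of _ "L1 @ L2"]) (simp add: fun_eq_iff exp_sum_append)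
    qed
    show "\<exists>L. (\<lambda>x. g x * h x) = exp_sum L" if gh: "(\<exists>L. g = exp_sum L) \<and> (\<exists>L. h = exp_sum L)" for g h
    proof -
      obtain L1 L2 where "g = exp_sum L1" "h = exp_sum L2" using gh by blast
      then show ?thesis
        by (intro exI[of _ "[(c * d, a + b). (c, a) \<leftarrow> L1, (d, b) \<leftarrow> L2]"])
           (simp add: fun_eq_iff exp_sum_mult)
    qed
    show "\<exists>g. (\<exists>L. g = exp_sum L) \<and> g x \<noteq> g y"
      if "x \<in> sphere 0 1 \<and> y \<in> sphere 0 1 \<and> x \<noteq> y" for x y
    proof -
      have "(x - y) \<bullet> x - (x - y) \<bullet> y = (x - y) \<bullet> (x - y)" by (simp add: inner_diff_right)
      then have "(x - y) \<bullet> x \<noteq> (x - y) \<bullet> y" using that by auto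
      then show ?thesis by (intro exI[of _ "exp_sum [(1, x - y)]"]) (auto simp: exp_sum_def)
    qed
  qed
  then obtain L where "\<And>x. x \<in> sphere 0 1 \<Longrightarrow> \<bar>f x - exp_sum L x\<bar> < e" by blast
  moreover have "exp_sum L x = (\<Sum>i<length L. fst (L ! i) * exp (snd (L ! i) \<bullet> x))" for x
    by (simp add: exp_sum_def sum_list_sum_nth atLeast0LessThan case_prod_beta)
  ultimately show thesis
    using that[where N="length L" and c="\<lambda>i. fst (L ! i)" and a="\<lambda>i. snd (L ! i)"] by simp
qed

lemma polynomial_approximation_Icc:
  fixes g :: "real \<Rightarrow> real"
  assumes "continuous_on {a..b} g" "0 < e"
  obtains \<beta> :: "nat \<Rightarrow> real" and M where "\<And>q. q \<in> {a..b} \<Longrightarrow> \<bar>g q - (\<Sum>j\<le>M. \<beta> j * q ^ j)\<bar> < e"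
proof -
  obtain p where "real_polynomial_function p" "\<And>q. q \<in> {a..b} \<Longrightarrow> \<bar>g q - p q\<bar> < e"
    using Stone_Weierstrass_real_polynomial_function[OF compact_Icc assms] by blast
  then show thesis using that real_polynomial_function_iff_sum by metis
qed

lemma radon_orthogonal_comp_exp_approx:
  fixes a :: "real^'n"
  assumes m: "0 < m" "m < CARD('n)" and \<eta>: "0 < \<eta>"
  obtains h where "continuous_on (sphere 0 1) h"
    "\<And>E. E \<in> grassmannian m \<Longrightarrow> \<bar>radon (\<lambda>x. exp (a \<bullet> x)) (orthogonal_comp E) - radon h E\<bar> \<le> \<eta>"
proof -
  obtain Fk :: "(real^'n) set" and uk where Fk: "subspace Fk" "dim Fk = CARD('n) - m" "uk \<in> Fk" "norm uk = 1"
    using exists_subspace_unit_vector[where 'a="real^'n" and d="CARD('n) - m"] m by auto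
  obtain Fm :: "(real^'n) set" and um where Fm: "subspace Fm" "dim Fm = m" "um \<in> Fm" "norm um = 1"
    using exists_subspace_unit_vector[where 'a="real^'n" and d=m] m by auto
  define \<Psi> where "\<Psi> = (\<lambda>r. radon (\<lambda>x. exp (r * (uk \<bullet> x))) Fk)"
  define C where "C j = radon (\<lambda>x. (um \<bullet> x) ^ (2 * j)) Fm" for j
  have "continuous_on UNIV \<Psi>"
    unfolding \<Psi>_def using Fk m by (intro continuous_on_radon_exp_mult) auto
  then have "continuous_on {0..(norm a)\<^sup>2} (\<lambda>q. \<Psi> (sqrt ((norm a)\<^sup>2 - q)))"
    by (intro continuous_on_compose2[OF \<open>continuous_on UNIV \<Psi>\<close>] continuous_intros) auto
  then obtain \<beta> M where \<beta>: "\<And>q. q \<in> {0..(norm a)\<^sup>2} \<Longrightarrow>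
      \<bar>\<Psi> (sqrt ((norm a)\<^sup>2 - q)) - (\<Sum>j\<le>M. \<beta> j * q ^ j)\<bar> < \<eta>"
    by (rule polynomial_approximation_Icc[OF _ \<eta>]) blast
  have C: "C j \<noteq> 0" for j
    using radon_even_power_pos[OF Fm(1) _ Fm(3,4), of j] Fm(2) m by (simp add: C_def)
  define h where "h x = (\<Sum>j\<le>M. (\<beta> j / C j) * (a \<bullet> x) ^ (2 * j))" for x
  show thesis
  proof
    show "continuous_on (sphere 0 1) h" unfolding h_def by (intro continuous_intros)
    fix E :: "(real^'n) set" assume "E \<in> grassmannian m"
    then have E: "subspace E" "dim E = m" by (simp_all add: grassmannian_def)
    define q where "q = (norm (orthogonal_projection E a))\<^sup>2"
    have "radon (\<lambda>x. exp (a \<bullet> x)) (orthogonal_comp E) = \<Psi> (sqrt ((norm a)\<^sup>2 - q))"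
      unfolding \<Psi>_def q_def using E m Fk by (intro radon_exp_orthogonal_comp) auto
    moreover have "radon (\<lambda>x. (a \<bullet> x) ^ (2 * j)) E = q ^ j * C j" for j
      unfolding q_def C_def using E m Fm by (intro radon_even_power_ridge) auto
    then have "radon h E = (\<Sum>j\<le>M. \<beta> j * q ^ j)"
      unfolding h_def using E m C by (subst radon_sum) (auto intro!: continuous_intros)
    moreover have "q \<in> {0..(norm a)\<^sup>2}"
      using norm_orthogonal_projection_le[OF E(1), of a] by (simp add: q_def power_mono)
    ultimately show "\<bar>radon (\<lambda>x. exp (a \<bullet> x)) (orthogonal_comp E) - radon h E\<bar> \<le> \<eta>"
      using \<beta> by (simp add: less_imp_le)
  qed
qed

lemma radon_orthogonal_comp_approx:
  fixes f :: "real^'n \<Rightarrow> real"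
  assumes m: "0 < m" "m < CARD('n)" and f: "continuous_on (sphere 0 1) f" and e: "0 < e"
  obtains h where "continuous_on (sphere 0 1) h"
    "\<And>E. E \<in> grassmannian m \<Longrightarrow> \<bar>radon f (orthogonal_comp E) - radon h E\<bar> \<le> e"
proof -
  obtain N :: nat and c a
    where g: "\<And>x. x \<in> sphere 0 1 \<Longrightarrow> \<bar>f x - (\<Sum>i<N. c i * exp (a i \<bullet> x))\<bar> < e / 2"
    by (rule exp_sum_dense[OF f half_gt_zero[OF e]]) blast
  define W where "W = (\<Sum>i<N. \<bar>c i\<bar>)"
  define \<eta> where "\<eta> = e / (2 * (W + 1))"
  have W: "0 \<le> W" by (simp add: W_def sum_nonneg)
  then have \<eta>: "0 < \<eta>" using e by (simp add: \<eta>_def)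
  have "W * \<eta> = e / 2 * (W / (W + 1))" by (simp add: \<eta>_def)
  also have "\<dots> \<le> e / 2 * 1" using W e by (intro mult_left_mono) auto
  finally have W\<eta>: "W * \<eta> \<le> e / 2" by simp
  have "\<exists>h. continuous_on (sphere 0 1) h \<and> (\<forall>E \<in> grassmannian m.
      \<bar>radon (\<lambda>x. exp (a i \<bullet> x)) (orthogonal_comp E) - radon h E\<bar> \<le> \<eta>)" for i
    by (rule radon_orthogonal_comp_exp_approx[OF m \<eta>, of "a i"]) blast
  then obtain hs where "\<forall>i. continuous_on (sphere 0 1) (hs i) \<and> (\<forall>E \<in> grassmannian m.
      \<bar>radon (\<lambda>x. exp (a i \<bullet> x)) (orthogonal_comp E) - radon (hs i) E\<bar> \<le> \<eta>)"
    using choice[of "\<lambda>i h. continuous_on (sphere 0 1) h \<and> (\<forall>E \<in> grassmannian m.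
      \<bar>radon (\<lambda>x. exp (a i \<bullet> x)) (orthogonal_comp E) - radon h E\<bar> \<le> \<eta>)"] by blast
  then have hs: "\<And>i. continuous_on (sphere 0 1) (hs i)"
    "\<And>i E. E \<in> grassmannian m \<Longrightarrow>
       \<bar>radon (\<lambda>x. exp (a i \<bullet> x)) (orthogonal_comp E) - radon (hs i) E\<bar> \<le> \<eta>"
    by simp_all
  show thesis
  proof
    show "continuous_on (sphere 0 1) (\<lambda>x. \<Sum>i<N. c i * hs i x)" by (intro continuous_intros hs(1))
    fix E :: "(real^'n) set" assume E: "E \<in> grassmannian m"
    then have E': "subspace E" "0 < dim E" "subspace (orthogonal_comp E)" "0 < dim (orthogonal_comp E)"
      using orthogonal_comp_grassmannian[OF E] m by (auto simp: grassmannian_def)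
    have "\<bar>radon f (orthogonal_comp E) - radon (\<lambda>x. \<Sum>i<N. c i * exp (a i \<bullet> x)) (orthogonal_comp E)\<bar>
        \<le> e / 2"
      using g by (intro radon_diff_le[OF E'(3,4) f] continuous_intros less_imp_le) auto
    moreover have "\<bar>radon (\<lambda>x. \<Sum>i<N. c i * exp (a i \<bullet> x)) (orthogonal_comp E)
        - radon (\<lambda>x. \<Sum>i<N. c i * hs i x) E\<bar> \<le> W * \<eta>"
      unfolding W_def using E E' hs by (intro radon_sum_diff_le) (auto intro!: continuous_intros)
    ultimately show "\<bar>radon f (orthogonal_comp E) - radon (\<lambda>x. \<Sum>i<N. c i * hs i x) E\<bar> \<le> e"
      using W\<eta> by linarith
  qed
qed

lemma sup_closure_subset_sup_closure:
  assumes "S \<subseteq> sup_closure G S'"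
  shows "sup_closure G S \<subseteq> sup_closure G S'"
proof
  fix g assume g: "g \<in> sup_closure G S"
  show "g \<in> sup_closure G S'"
    unfolding sup_closure_def
  proof (intro CollectI allI impI)
    fix e :: real assume "0 < e"
    then obtain h where h: "h \<in> S" "\<forall>E\<in>G. \<bar>g E - h E\<bar> \<le> e / 2"
      using g half_gt_zero unfolding sup_closure_def by blast
    then obtain h' where h': "h' \<in> S'" "\<forall>E\<in>G. \<bar>h E - h' E\<bar> \<le> e / 2"
      using assms \<open>0 < e\<close> half_gt_zero unfolding sup_closure_def by blast
    have "\<bar>g E - h' E\<bar> \<le> e" if "E \<in> G" for E
    proof -
      have "\<bar>g E - h E\<bar> \<le> e / 2" "\<bar>h E - h' E\<bar> \<le> e / 2" using h(2) h'(2) that by auto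
      then show ?thesis unfolding abs_le_iff by linarith
    qed
    then show "\<exists>h\<in>S'. \<forall>E\<in>G. \<bar>g E - h E\<bar> \<le> e" using h'(1) by blast
  qed
qed

lemma sup_closure_compose:
  assumes g: "g \<in> sup_closure G' S" and \<phi>: "\<phi> ` G \<subseteq> G'" and g': "\<And>E. E \<in> G \<Longrightarrow> g' E = g (\<phi> E)"
  shows "g' \<in> sup_closure G ((\<lambda>h E. h (\<phi> E)) ` S)"
  unfolding sup_closure_def
proof (intro CollectI allI impI)
  fix e :: real assume "0 < e"
  then obtain h where "h \<in> S" "\<forall>E\<in>G'. \<bar>g E - h E\<bar> \<le> e"
    using g unfolding sup_closure_def by blast
  then show "\<exists>h\<in>(\<lambda>h E. h (\<phi> E)) ` S. \<forall>E\<in>G. \<bar>g' E - h E\<bar> \<le> e"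
    using \<phi> g' by (intro bexI[of _ "\<lambda>E. h (\<phi> E)"]) auto
qed

lemma radon_orthogonal_comp_in_sup_closure:
  assumes "0 < m" "m < CARD('n)"
  shows "(\<lambda>f E. radon f (orthogonal_comp E)) ` Csphere
    \<subseteq> sup_closure (grassmannian m :: (real^'n) set set) ((\<lambda>f E. radon f E) ` Csphere)"
proof (clarify)
  fix f :: "real^'n \<Rightarrow> real" assume "f \<in> Csphere"
  then have f: "continuous_on (sphere 0 1) f" by (simp add: Csphere_def)
  show "(\<lambda>E. radon f (orthogonal_comp E)) \<in> sup_closure (grassmannian m) ((\<lambda>f E. radon f E) ` Csphere)"
    unfolding sup_closure_def
  proof (intro CollectI allI impI)
    fix e :: real assume "0 < e"
    then obtain h where "continuous_on (sphere 0 1) h"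
      "\<And>E. E \<in> grassmannian m \<Longrightarrow> \<bar>radon f (orthogonal_comp E) - radon h E\<bar> \<le> e"
      using radon_orthogonal_comp_approx[OF assms f] by blast
    then show "\<exists>h\<in>(\<lambda>f E. radon f E) ` Csphere. \<forall>E\<in>grassmannian m. \<bar>radon f (orthogonal_comp E) - h E\<bar> \<le> e"
      by (intro bexI[of _ "\<lambda>E. radon h E"]) (auto simp: Csphere_def)
  qed
qed

lemma radon_in_sup_closure_radon_orthogonal_comp:
  assumes k: "0 < k" "k < CARD('n)"
  shows "(\<lambda>f E. radon f E) ` Csphere \<subseteq> sup_closure (grassmannian (CARD('n) - k) :: (real^'n) set set)
    ((\<lambda>f E. radon f (orthogonal_comp E)) ` Csphere)"
proof (clarify)
  let ?G = "grassmannian (CARD('n) - k) :: (real^'n) set set"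
  let ?R = "(\<lambda>f E. radon f E) ` Csphere"
  fix f :: "real^'n \<Rightarrow> real" assume "f \<in> Csphere"
  then have "(\<lambda>E. radon f (orthogonal_comp E)) \<in> sup_closure (grassmannian k) ?R"
    using radon_orthogonal_comp_in_sup_closure[where 'n='n, OF k] by blast
  moreover have "orthogonal_comp ` ?G \<subseteq> grassmannian k"
    using orthogonal_comp_grassmannian[where 'a="real^'n" and m="CARD('n) - k"] k by auto
  moreover have "radon f E = radon f (orthogonal_comp (orthogonal_comp E))" if "E \<in> ?G" for E
    using that orthogonal_comp_self[of E] by (simp add: grassmannian_def)
  ultimately have "(\<lambda>E. radon f E) \<in> sup_closure ?G ((\<lambda>h E. h (orthogonal_comp E)) ` ?R)"
    by (rule sup_closure_compose)
  then show "(\<lambda>E. radon f E) \<in> sup_closure ?G ((\<lambda>f E. radon f (orthogonal_comp E)) ` Csphere)"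
    by (simp add: image_image)
qed

theorem mainTheorem11:
  fixes k :: nat
  assumes "1 \<le> k" and "k \<le> CARD('n::finite) - 1"
  shows "sup_closure (grassmannian (CARD('n) - k) :: (real^'n) set set)
            ((\<lambda>f E. radon f E) ` Csphere)
       = sup_closure (grassmannian (CARD('n) - k))
            ((\<lambda>f E. radon f (orthogonal_comp E)) ` Csphere)"
proof
  let ?G = "grassmannian (CARD('n) - k) :: (real^'n) set set"
  have k: "0 < k" "k < CARD('n)" using assms by linarith+
  show "sup_closure ?G ((\<lambda>f E. radon f E) ` Csphere)
      \<subseteq> sup_closure ?G ((\<lambda>f E. radon f (orthogonal_comp E)) ` Csphere)"
    by (rule sup_closure_subset_sup_closure[OF radon_in_sup_closure_radon_orthogonal_comp[OF k]])
  show "sup_closure ?G ((\<lambda>f E. radon f (orthogonal_comp E)) ` Csphere)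
      \<subseteq> sup_closure ?G ((\<lambda>f E. radon f E) ` Csphere)"
    using k by (intro sup_closure_subset_sup_closure radon_orthogonal_comp_in_sup_closure) auto
qed

end
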